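(* Let $X$ be a real Hilbert space, $A,B\colon X\rightrightarrows X$ maximally monotone, $T:=\operatorname{Id}-J_A+J_BR_A$, $v:=P_{\overline{\operatorname{ran}}(\operatorname{Id}-T)}(0)$, $D:=\operatorname{dom}A-\operatorname{dom}B$, $R:=\operatorname{ran}A+\operatorname{ran}B$, $v_D:=P_{\overline D}(0)$, $v_R:=P_{\overline R}(0)$, and assume $\overline{\operatorname{ran}}(\operatorname{Id}-T)=\overline{D\cap R}=\overline D\cap\overline R$. Suppose that $f\in\operatorname{Fix}(v+T)$ and let $x\in X$. Then: (i) the sequence $(J_AT^nx+nv_R,\,J_{A^{-1}}T^nx+nv_D)_{n\in\mathbb N}$ is Fejér monotone with respect to $\{(J_Ay,J_{A^{-1}}y): y\in\operatorname{Fix}(v+T)\}$; (ii) the sequence $(J_AT^nx+nv_R,\,J_{A^{-1}}T^nx+nv_D)_{n}$ is bounded; (iii) the sequence $(J_BR_AT^nx+nv_R,\,J_{B^{-1}}R_AT^nx-nv_D)_n$ is bounded; (iv) the sequence $\big((0,-v)+(J_AT^nx+nv_R,\,J_{A^{-1}}T^nx+nv_D)\big)_n$ is Fejér monotone with respect to $\mathcal S$; (v) $(J_AT^nx)_n$ is bounded if and only if $v_R=0$; (vi) if $v_R\neq0$, then $\|J_AT^nx\|\to+\infty$; (vii) $(J_{A^{-1}}T^nx)_n$ is bounded if and only if $v_D=0$; (viii) if $v_D\neq0$, then $\|J_{A^{-1}}T^nx\|\to+\infty$; (ix) if $A$ and $B$ are paramonotone, then the sequence $\big((0,-v)+(J_AT^nx+nv_R,\,J_{A^{-1}}T^nx+nv_D)\big)_n$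 is Fejér monotone with respect to $Z\times K$.
   Context: $J_C:=(\operatorname{Id}+C)^{-1}$, $R_C:=2J_C-\operatorname{Id}$ for maximally monotone $C$. $P_S$ is the projection onto a nonempty closed convex set. $\operatorname{Fix}(v+T):=\{y\in X: y=v+Ty\}$. A sequence $(x_n)$ in a Hilbert space (here $X\times X$ with the product norm) is Fejér monotone with respect to a nonempty set $C$ if $\|x_{n+1}-c\|\le\|x_n-c\|$ for all $c\in C$ and $n$. $\mathcal S:=\{(z,k)\in X\times X: -k\in B(z-v),\ k\in -v+Az\}$. $Z:=\{x\in X: 0\in -v+Ax+B(x-v)\}$ and $K:=\{k\in X: 0\in(-v+A)^{-1}(k)+(B(\cdot-v))^{-\vee}(k)\}$, where for an operator $M$, $M^{-\vee}:=(-\operatorname{Id})\circ M^{-1}\circ(-\operatorname{Id})$; equivalently $K=\{k: A^{-1}(k+v)\cap(v+B^{-1}(-k))\neq\varnothing\}$. A monotone $C$ is paramonotone if whenever $(x,u),(y,w)\in\operatorname{gra}C$ and $\langle x-y,u-w\rangle=0$, then $(x,w),(y,u)\in\operatorname{gra}C$. *)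

theory Defs
  imports "HOL-Analysis.Analysis"
begin

text \<open>Set-valued operators on a real Hilbert space are modelled as functions
  'a => 'a set (the value at x is the set Ax).\<close>

definition op_dom :: "('a \<Rightarrow> 'b set) \<Rightarrow> 'a set" where
  "op_dom A = {x. A x \<noteq> {}}"

definition op_ran :: "('a \<Rightarrow> 'b set) \<Rightarrow> 'b set" where
  "op_ran A = (\<Union>x. A x)"

definition op_inv :: "('a \<Rightarrow> 'b set) \<Rightarrow> 'b \<Rightarrow> 'a set" where
  "op_inv A u = {x. u \<in> A x}"

definition monotone_op :: "('a::real_inner \<Rightarrow> 'a set) \<Rightarrow> bool" where
  "monotone_op A \<longleftrightarrow>
     (\<forall>x y u w. u \<in> A x \<longrightarrow> w \<in> A y \<longrightarrow> 0 \<le> inner (x - y) (u - w))"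

definition max_monotone :: "('a::real_inner \<Rightarrow> 'a set) \<Rightarrow> bool" where
  "max_monotone A \<longleftrightarrow> monotone_op A \<and>
     (\<forall>B. monotone_op B \<and> (\<forall>x. A x \<subseteq> B x) \<longrightarrow> B = A)"

definition paramonotone :: "('a::real_inner \<Rightarrow> 'a set) \<Rightarrow> bool" where
  "paramonotone C \<longleftrightarrow> monotone_op C \<and>
     (\<forall>x y u w. u \<in> C x \<longrightarrow> w \<in> C y \<longrightarrow> inner (x - y) (u - w) = 0
        \<longrightarrow> w \<in> C x \<and> u \<in> C y)"

text \<open>Resolvent J_C = (Id + C)^{-1}; single-valued with full domain for
  maximally monotone C (Minty), so we take the unique element.\<close>
definition resolvent :: "('a::real_inner \<Rightarrow> 'a set) \<Rightarrow> 'a \<Rightarrow> 'a" where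
  "resolvent C x = (THE p. x - p \<in> C p)"

definition reflected :: "('a::real_inner \<Rightarrow> 'a set) \<Rightarrow> 'a \<Rightarrow> 'a" where
  "reflected C x = 2 *\<^sub>R resolvent C x - x"

definition proj :: "'a::real_inner set \<Rightarrow> 'a \<Rightarrow> 'a" where
  "proj S x = (THE p. p \<in> S \<and> (\<forall>y\<in>S. dist x p \<le> dist x y))"

definition fixset :: "'a::real_vector \<Rightarrow> ('a \<Rightarrow> 'a) \<Rightarrow> 'a set" where
  "fixset v T = {y. y = v + T y}"

definition fejer_monotone :: "'a::real_normed_vector set \<Rightarrow> (nat \<Rightarrow> 'a) \<Rightarrow> bool" where
  "fejer_monotone C s \<longleftrightarrow> C \<noteq> {} \<and>
     (\<forall>c\<in>C. \<forall>n. norm (s (Suc n) - c) \<le> norm (s n - c))"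

definition set_sum :: "'a::ab_group_add set \<Rightarrow> 'a set \<Rightarrow> 'a set" where
  "set_sum S T = {s + t | s t. s \<in> S \<and> t \<in> T}"

definition set_diff :: "'a::ab_group_add set \<Rightarrow> 'a set \<Rightarrow> 'a set" where
  "set_diff S T = {s - t | s t. s \<in> S \<and> t \<in> T}"

definition op_vee :: "('a::ab_group_add \<Rightarrow> 'a set) \<Rightarrow> 'a \<Rightarrow> 'a set" where
  "op_vee M k = uminus ` op_inv M (- k)"

definition solS :: "('a::real_inner \<Rightarrow> 'a set) \<Rightarrow> ('a \<Rightarrow> 'a set) \<Rightarrow> 'a \<Rightarrow> ('a \<times> 'a) set" where
  "solS A B v = {(z, k). - k \<in> B (z - v) \<and> k \<in> (\<lambda>u. - v + u) ` A z}"

definition solZ :: "('a::real_inner \<Rightarrow> 'a set) \<Rightarrow> ('a \<Rightarrow> 'a set) \<Rightarrow> 'a \<Rightarrow> 'a set" where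
  "solZ A B v = {x. 0 \<in> set_sum ((\<lambda>u. - v + u) ` A x) (B (x - v))}"

definition solK :: "('a::real_inner \<Rightarrow> 'a set) \<Rightarrow> ('a \<Rightarrow> 'a set) \<Rightarrow> 'a \<Rightarrow> 'a set" where
  "solK A B v = {k. 0 \<in> set_sum (op_inv (\<lambda>x. (\<lambda>u. - v + u) ` A x) k)
                                 (op_vee (\<lambda>y. B (y - v)) k)}"

end

theory Submission
  imports Defs
begin

text \<open>
  Minimizing \<open>c + \<bar>z\<bar>\<^sup>2/2\<close> over a closed
  convex subset of \<open>X \<times> \<real>\<close> gives both the projection onto closed convex sets and, applied to
  the epigraph of the Fitzpatrick function, Minty's theorem; hence resolvents are defined
  everywhere and the pair \<open>(J\<^sub>A, J\<^bsub>A\<^sup>-\<^sup>1\<^esub>)\<close> is nonexpansive. Resolvents of small multiples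
  of \<open>A\<close> show that \<open>closure (dom A)\<close> is convex, and shifting graph points through
  resolvents shows that \<open>closure D\<close> is invariant under translation by \<open>\<plusminus>v\<^sub>R\<close> and
  \<open>closure R\<close> under translation by \<open>v\<^sub>D\<close>; minimality of the projections then gives
  \<open>v\<^sub>D \<bottom> v\<^sub>R\<close> and \<open>v = v\<^sub>D + v\<^sub>R\<close>.

  For a fixed point \<open>y\<close> of \<open>v + T\<close> one gets \<open>T y = y - v\<close> and
  \<open>J\<^sub>A (y - v) = J\<^sub>A y - v\<^sub>R\<close>, so the shifted sequence \<open>(J\<^sub>A T\<^sup>n x + n v\<^sub>R, J\<^bsub>A\<^sup>-\<^sup>1\<^esub> T\<^sup>n x + n v\<^sub>D)\<close>
  minus \<open>(J\<^sub>A y, J\<^bsub>A\<^sup>-\<^sup>1\<^esub> y)\<close> equals \<open>(J\<^sub>A, J\<^bsub>A\<^sup>-\<^sup>1\<^esub>)\<close> applied to \<open>T\<^sup>n x\<close> minus the same at \<open>T\<^sup>n y\<close>.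
  Since \<open>\<bar>T z - T w\<bar> \<le> \<bar>(J\<^sub>A, J\<^bsub>A\<^sup>-\<^sup>1\<^esub>) z - (J\<^sub>A, J\<^bsub>A\<^sup>-\<^sup>1\<^esub>) w\<bar> \<le> \<bar>z - w\<bar>\<close>, this distance
  decreases: Fejer monotonicity, and with it boundedness, after which the drifts
  \<open>n v\<^sub>R\<close> and \<open>n v\<^sub>D\<close> decide whether \<open>J\<^sub>A T\<^sup>n x\<close> and \<open>J\<^bsub>A\<^sup>-\<^sup>1\<^esub> T\<^sup>n x\<close> stay bounded. Points
  \<open>(z, k)\<close> of \<open>S\<close> correspond to the fixed points \<open>z + k + v\<close>, and paramonotonicity
  makes \<open>S = Z \<times> K\<close>.
\<close>

section \<open>Maximal monotone operators\<close>

lemma monotone_opD: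
  "monotone_op A \<Longrightarrow> u \<in> A x \<Longrightarrow> w \<in> A y \<Longrightarrow> 0 \<le> inner (x - y) (u - w)"
  unfolding monotone_op_def by blast

lemma max_monotone_imp_monotone_op: "max_monotone A \<Longrightarrow> monotone_op A"
  unfolding max_monotone_def by blast

lemma monotone_op_insert:
  assumes mono: "monotone_op A"
    and compatible: "\<And>y w. w \<in> A y \<Longrightarrow> 0 \<le> inner (x - y) (u - w)"
  shows "monotone_op (A(x := insert u (A x)))"
  unfolding monotone_op_def
proof (intro allI impI)
  fix x1 y1 u1 w1 assume "u1 \<in> (A(x := insert u (A x))) x1" "w1 \<in> (A(x := insert u (A x))) y1"
  then consider "u1 \<in> A x1" "w1 \<in> A y1" | "x1 = x" "u1 = u" "w1 \<in> A y1"
    | "u1 \<in> A x1" "y1 = x" "w1 = u" | "x1 = x" "u1 = u" "y1 = x" "w1 = u"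
    by (auto split: if_splits)
  then show "0 \<le> inner (x1 - y1) (u1 - w1)"
  proof cases
    case 1
    then show ?thesis using monotone_opD[OF mono] by blast
  next
    case 2
    then show ?thesis using compatible by blast
  next
    case 3
    then have "inner (x1 - y1) (u1 - w1) = inner (x - x1) (u - u1)"
      by (simp add: inner_diff_left inner_diff_right)
    then show ?thesis using compatible 3(1) by simp
  qed simp
qed

lemma max_monotoneD:
  assumes "max_monotone A" and "\<And>y w. w \<in> A y \<Longrightarrow> 0 \<le> inner (x - y) (u - w)"
  shows "u \<in> A x"
proof -
  have "monotone_op (A(x := insert u (A x)))"
    using monotone_op_insert[OF max_monotone_imp_monotone_op[OF assms(1)] assms(2)] .
  moreover have "\<forall>z. A z \<subseteq> (A(x := insert u (A x))) z" by auto
  ultimately have "A(x := insert u (A x)) = A" using assms(1) unfolding max_monotone_def by blast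
  then show ?thesis by (metis fun_upd_same insertI1)
qed

lemma max_monotoneI:
  assumes "monotone_op A"
    and maximal: "\<And>x u. (\<And>y w. w \<in> A y \<Longrightarrow> 0 \<le> inner (x - y) (u - w)) \<Longrightarrow> u \<in> A x"
  shows "max_monotone A"
  unfolding max_monotone_def
proof (intro conjI allI impI ext equalityI)
  fix A' x assume A': "monotone_op A' \<and> (\<forall>x. A x \<subseteq> A' x)"
  show "A' x \<subseteq> A x" using maximal monotone_opD[of A'] A' by blast
  show "A x \<subseteq> A' x" using A' by blast
qed (rule \<open>monotone_op A\<close>)

lemma max_monotone_op_inv:
  assumes "max_monotone A"
  shows "max_monotone (op_inv A)"
proof (rule max_monotoneI)
  show "monotone_op (op_inv A)"
    using monotone_opD[OF max_monotone_imp_monotone_op[OF assms]]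
    unfolding monotone_op_def op_inv_def by (simp add: inner_commute)
  fix x u assume "\<And>y w. w \<in> op_inv A y \<Longrightarrow> 0 \<le> inner (x - y) (u - w)"
  then have "x \<in> A u"
    by (intro max_monotoneD[OF assms]) (simp add: op_inv_def inner_commute)
  then show "u \<in> op_inv A x" unfolding op_inv_def by simp
qed

lemma max_monotone_translate:
  assumes "max_monotone A"
  shows "max_monotone (\<lambda>x. (\<lambda>w. w - z) ` A x)"
proof (rule max_monotoneI)
  show "monotone_op (\<lambda>x. (\<lambda>w. w - z) ` A x)"
    using monotone_opD[OF max_monotone_imp_monotone_op[OF assms]]
    unfolding monotone_op_def by auto
  fix x u assume "\<And>y w. w \<in> (\<lambda>w. w - z) ` A y \<Longrightarrow> 0 \<le> inner (x - y) (u - w)"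
  then have "u + z \<in> A x"
    by (intro max_monotoneD[OF assms]) (force simp: algebra_simps)
  then show "u \<in> (\<lambda>w. w - z) ` A x" by force
qed

lemma max_monotone_scale:
  assumes "max_monotone A" and "0 < l"
  shows "max_monotone (\<lambda>x. (\<lambda>w. l *\<^sub>R w) ` A x)"
proof (rule max_monotoneI)
  show "monotone_op (\<lambda>x. (\<lambda>w. l *\<^sub>R w) ` A x)"
    using monotone_opD[OF max_monotone_imp_monotone_op[OF assms(1)]] \<open>0 < l\<close>
    unfolding monotone_op_def by (auto simp flip: scaleR_diff_right)
  fix x u assume compatible: "\<And>y w. w \<in> (\<lambda>w. l *\<^sub>R w) ` A y \<Longrightarrow> 0 \<le> inner (x - y) (u - w)"
  have "(1/l) *\<^sub>R u \<in> A x"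
  proof (rule max_monotoneD[OF assms(1)])
    fix y w assume "w \<in> A y"
    then have "0 \<le> (1/l) * inner (x - y) (u - l *\<^sub>R w)"
      using compatible \<open>0 < l\<close> by simp
    also have "\<dots> = inner (x - y) ((1/l) *\<^sub>R u - w)"
      using \<open>0 < l\<close> by (simp add: inner_diff_right field_simps)
    finally show "0 \<le> inner (x - y) ((1/l) *\<^sub>R u - w)" .
  qed
  then show "u \<in> (\<lambda>w. l *\<^sub>R w) ` A x"
    using \<open>0 < l\<close> by (force intro: image_eqI[of _ _ "(1/l) *\<^sub>R u"])
qed

section \<open>Minimizing a quadratic over a closed convex set\<close>

lemma nonneg_if_affine_nonneg_at_right_0:
  fixes L Q :: real
  assumes "\<And>t. 0 < t \<Longrightarrow> t \<le> 1 \<Longrightarrow> 0 \<le> L + t * Q"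
  shows "0 \<le> L"
proof (rule tendsto_lowerbound)
  show "((\<lambda>t. L + t * Q) \<longlongrightarrow> L) (at_right 0)"
    by (auto intro!: tendsto_eq_intros)
  show "\<forall>\<^sub>F t in at_right 0. 0 \<le> L + t * Q"
    using eventually_at_right_real[of 0 1] by (rule eventually_mono) (use assms in auto)
qed simp

lemma Cauchy_if_sq_dist_le:
  fixes s :: "nat \<Rightarrow> 'a::real_normed_vector"
  assumes bound: "\<And>i j. norm (s i - s j)^2 \<le> K * (1/(real i + 1) + 1/(real j + 1))"
  shows "Cauchy s"
proof (rule metric_CauchyI)
  fix e :: real assume "0 < e"
  have "0 \<le> K" using bound[of 0 0] by simp
  obtain M :: nat where M: "2 * K / e^2 < real M" using reals_Archimedean2 by blast
  have "dist (s m) (s n) < e" if "M \<le> m" "M \<le> n" for m n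
  proof -
    have "1/(real m + 1) \<le> 1/(real M + 1)" "1/(real n + 1) \<le> 1/(real M + 1)"
      using that by (simp_all add: frac_le)
    then have "1/(real m + 1) + 1/(real n + 1) \<le> 2/(real M + 1)" by simp
    then have "K * (1/(real m + 1) + 1/(real n + 1)) \<le> K * (2/(real M + 1))"
      using \<open>0 \<le> K\<close> by (rule mult_left_mono)
    then have "norm (s m - s n)^2 \<le> 2 * K / (real M + 1)"
      using bound[of m n] by (simp add: mult.commute)
    also have "\<dots> < e^2"
    proof -
      have "2 * K < real M * e^2" using M \<open>0 < e\<close> by (simp add: pos_divide_less_eq)
      also have "\<dots> \<le> (real M + 1) * e^2" by (simp add: mult_right_mono)
      finally show ?thesis by (simp add: pos_divide_less_eq mult.commute)
    qed
    finally show ?thesis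
      using \<open>0 < e\<close> by (simp add: dist_norm power_less_imp_less_base)
  qed
  then show "\<exists>M. \<forall>m\<ge>M. \<forall>n\<ge>M. dist (s m) (s n) < e" by blast
qed

lemma obtain_minimizing_sequence:
  fixes F :: "'b \<Rightarrow> real"
  assumes "S \<noteq> {}" and "bdd_below (F ` S)"
  obtains s where "\<And>k. s k \<in> S" and "\<And>k. F (s k) < Inf (F ` S) + 1/(real k + 1)"
proof -
  have "\<exists>y\<in>S. F y < Inf (F ` S) + 1/(real k + 1)" for k
    using cInf_lessD[of "F ` S" "Inf (F ` S) + 1/(real k + 1)"] assms(1) by fastforce
  then show ?thesis using that by metis
qed

lemma norm_midpoint_sq:
  fixes a b :: "'a::real_inner"
  shows "norm ((1/2) *\<^sub>R a + (1/2) *\<^sub>R b)^2 = (norm a^2 + norm b^2)/2 - norm (a - b)^2/4"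
  by (simp add: power2_norm_eq_inner inner_add_left inner_add_right inner_diff_left
      inner_diff_right inner_commute field_simps)

lemma LIMSEQ_between_inverse_Suc:
  fixes f :: "nat \<Rightarrow> real"
  assumes "\<And>k. m \<le> f k" and "\<And>k. f k \<le> m + 1/(real k + 1)"
  shows "f \<longlonglongrightarrow> m"
proof (rule tendsto_sandwich[where f="\<lambda>k. m" and h="\<lambda>k. m + 1/(real k + 1)"])
  have "(\<lambda>k. 1/(real k + 1)) \<longlonglongrightarrow> 0"
    using LIMSEQ_inverse_real_of_nat by (simp add: inverse_eq_divide add.commute)
  from tendsto_add[OF tendsto_const this] show "(\<lambda>k. m + 1/(real k + 1)) \<longlonglongrightarrow> m" by simp
qed (use assms in simp_all)

lemma quadratic_minimizing_sequence_Cauchy: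
  fixes s :: "nat \<Rightarrow> 'b::real_inner \<times> real"
  assumes "convex E" and sE: "\<And>k. s k \<in> E"
    and m_le: "\<And>e. e \<in> E \<Longrightarrow> m \<le> snd e + norm (fst e)^2 / 2"
    and s_le: "\<And>k. snd (s k) + norm (fst (s k))^2 / 2 < m + 1/(real k + 1)"
  shows "Cauchy (\<lambda>k. fst (s k))"
proof (rule Cauchy_if_sq_dist_le)
  fix i j
  define H :: "'b \<times> real \<Rightarrow> real" where "H e = snd e + norm (fst e)^2 / 2" for e
  have "(1/2) *\<^sub>R s i + (1/2) *\<^sub>R s j \<in> E"
    using convexD[OF \<open>convex E\<close> sE sE, of "1/2" "1/2"] by simp
  from m_le[OF this] have "m \<le> H ((1/2) *\<^sub>R s i + (1/2) *\<^sub>R s j)" unfolding H_def .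
  also have "\<dots> = (H (s i) + H (s j))/2 - norm (fst (s i) - fst (s j))^2/8"
    unfolding H_def by (simp add: norm_midpoint_sq field_simps)
  finally have "norm (fst (s i) - fst (s j))^2 \<le> 4 * ((H (s i) - m) + (H (s j) - m))"
    by (simp add: field_simps)
  also have "\<dots> \<le> 4 * (1/(real i + 1) + 1/(real j + 1))"
    using s_le[of i] s_le[of j] unfolding H_def
    by (intro mult_left_mono add_mono) (simp_all add: algebra_simps)
  finally show "norm (fst (s i) - fst (s j))^2 \<le> 4 * (1/(real i + 1) + 1/(real j + 1))" .
qed

lemma quadratic_attains_inf:
  fixes E :: "('b::{real_inner,complete_space} \<times> real) set"
  assumes "closed E" and "convex E" and "E \<noteq> {}"
    and lower: "\<And>z c. (z, c) \<in> E \<Longrightarrow> b \<le> c + norm z^2 / 2"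
  obtains z0 c0 where "(z0, c0) \<in> E"
    and "\<And>z c. (z, c) \<in> E \<Longrightarrow> c0 + norm z0^2 / 2 \<le> c + norm z^2 / 2"
proof -
  define H :: "'b \<times> real \<Rightarrow> real" where "H e = snd e + norm (fst e)^2 / 2" for e
  define m where "m = Inf (H ` E)"
  have bdd: "bdd_below (H ` E)"
    using lower unfolding H_def bdd_below_def by force
  have m_le: "m \<le> H e" if "e \<in> E" for e
    unfolding m_def using bdd that by (simp add: cInf_lower)
  obtain s where sE: "\<And>k. s k \<in> E" and sH: "\<And>k. H (s k) < m + 1/(real k + 1)"
    using obtain_minimizing_sequence[OF \<open>E \<noteq> {}\<close> bdd] unfolding m_def by blast
  have "Cauchy (\<lambda>k. fst (s k))"
    by (rule quadratic_minimizing_sequence_Cauchy[OF \<open>convex E\<close> sE])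
      (use m_le sH in \<open>simp_all add: H_def\<close>)
  then obtain z0 where z0: "(\<lambda>k. fst (s k)) \<longlonglongrightarrow> z0"
    using Cauchy_convergent_iff convergent_def by blast
  have "(\<lambda>k. H (s k)) \<longlonglongrightarrow> m"
    using m_le sE sH by (intro LIMSEQ_between_inverse_Suc) (simp_all add: less_imp_le)
  then have "(\<lambda>k. H (s k) - norm (fst (s k))^2 / 2) \<longlonglongrightarrow> m - norm z0^2 / 2"
    by (intro tendsto_intros z0) simp_all
  then have "(\<lambda>k. (fst (s k), snd (s k))) \<longlonglongrightarrow> (z0, m - norm z0^2 / 2)"
    unfolding H_def by (intro tendsto_Pair z0) simp
  then have lim_in: "(z0, m - norm z0^2 / 2) \<in> E"
    using closed_sequentially[OF \<open>closed E\<close>, of s] sE by simp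
  show ?thesis
  proof (rule that[OF lim_in])
    fix z c assume "(z, c) \<in> E"
    then show "m - norm z0^2 / 2 + norm z0^2 / 2 \<le> c + norm z^2 / 2"
      using m_le unfolding H_def by fastforce
  qed
qed

lemma quadratic_min_variational:
  fixes E :: "('b::real_inner \<times> real) set"
  assumes "convex E" and "(z0, c0) \<in> E" and "(z, c) \<in> E"
    and min: "\<And>z c. (z, c) \<in> E \<Longrightarrow> c0 + norm z0^2 / 2 \<le> c + norm z^2 / 2"
  shows "0 \<le> c - c0 + inner z0 (z - z0)"
proof (rule nonneg_if_affine_nonneg_at_right_0)
  fix t :: real assume "0 < t" "t \<le> 1"
  have "((1 - t) *\<^sub>R z0 + t *\<^sub>R z, (1 - t) * c0 + t * c) \<in> E"
    using convexD[OF assms(1-3), of "1 - t" t] \<open>0 < t\<close> \<open>t \<le> 1\<close> by simp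
  from min[OF this]
  have "c0 + norm z0^2 / 2 \<le> (1 - t) * c0 + t * c + norm (z0 + t *\<^sub>R (z - z0))^2 / 2"
    by (simp add: algebra_simps)
  also have "\<dots> = c0 + norm z0^2 / 2
      + t * ((c - c0 + inner z0 (z - z0)) + t * (norm (z - z0)^2 / 2))"
    by (simp add: power2_norm_eq_inner inner_add_left inner_add_right inner_diff_left
        inner_diff_right inner_commute field_simps)
  finally have "0 \<le> t * ((c - c0 + inner z0 (z - z0)) + t * (norm (z - z0)^2 / 2))"
    by simp
  then show "0 \<le> c - c0 + inner z0 (z - z0) + t * (norm (z - z0)^2 / 2)"
    using \<open>0 < t\<close> by (simp add: zero_le_mult_iff)
qed

section \<open>Projections onto closed convex sets\<close>

lemma
  fixes S :: "'a::real_normed_vector set"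
  shows closed_translation_Times_zero: "closed S \<Longrightarrow> closed (((\<lambda>y. y - x) ` S) \<times> {0::real})"
    and convex_translation_Times_zero: "convex S \<Longrightarrow> convex (((\<lambda>y. y - x) ` S) \<times> {0::real})"
proof -
  have translate: "(\<lambda>y. y - x) ` S = (+) (- x) ` S" by force
  show "closed S \<Longrightarrow> closed (((\<lambda>y. y - x) ` S) \<times> {0::real})"
    unfolding translate by (intro closed_Times closed_translation) simp_all
  show "convex S \<Longrightarrow> convex (((\<lambda>y. y - x) ` S) \<times> {0::real})"
    unfolding translate by (intro convex_Times convex_translation) simp_all
qed

lemma nearest_point_exists:
  fixes S :: "'a::{real_inner,complete_space} set"
  assumes "closed S" and "convex S" and "S \<noteq> {}"
  obtains p where "p \<in> S" and "\<And>y. y \<in> S \<Longrightarrow> dist x p \<le> dist x y"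
proof -
  define E where "E = ((\<lambda>y. y - x) ` S) \<times> {0::real}"
  have E: "closed E" "convex E" "E \<noteq> {}"
    using closed_translation_Times_zero[OF \<open>closed S\<close>] convex_translation_Times_zero[OF \<open>convex S\<close>]
      \<open>S \<noteq> {}\<close> unfolding E_def by simp_all
  have lower: "0 \<le> c + norm z^2 / 2" if "(z, c) \<in> E" for z c
    using that unfolding E_def by auto
  obtain z0 c0 where z0: "(z0, c0) \<in> E"
    and min: "\<And>z c. (z, c) \<in> E \<Longrightarrow> c0 + norm z0^2 / 2 \<le> c + norm z^2 / 2"
    using quadratic_attains_inf[OF E lower] by metis
  show ?thesis
  proof (rule that)
    show "z0 + x \<in> S" using z0 unfolding E_def by auto
    fix y assume "y \<in> S"
    then have "(y - x, 0) \<in> E" unfolding E_def by simp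
    moreover have "c0 = 0" using z0 unfolding E_def by simp
    ultimately have "norm z0^2 \<le> norm (y - x)^2" using min by fastforce
    then have "norm z0 \<le> norm (y - x)" by (rule power2_le_imp_le) simp
    then show "dist x (z0 + x) \<le> dist x y" by (simp add: dist_norm norm_minus_commute)
  qed
qed

lemma nearest_point_variational:
  fixes S :: "'a::real_inner set"
  assumes "convex S" and "p \<in> S" and nearest: "\<And>y. y \<in> S \<Longrightarrow> dist x p \<le> dist x y"
    and "y \<in> S"
  shows "inner (x - p) (y - p) \<le> 0"
proof -
  define E where "E = ((\<lambda>y. y - x) ` S) \<times> {0::real}"
  have "0 \<le> 0 - 0 + inner (p - x) ((y - x) - (p - x))"
  proof (rule quadratic_min_variational[of E])
    show "convex E" unfolding E_def using \<open>convex S\<close> by (rule convex_translation_Times_zero)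
    show "(p - x, 0) \<in> E" "(y - x, 0) \<in> E" using \<open>p \<in> S\<close> \<open>y \<in> S\<close> unfolding E_def by auto
    fix z c assume "(z, c) \<in> E"
    then obtain y' where "y' \<in> S" "z = y' - x" "c = 0" unfolding E_def by auto
    moreover have "norm (p - x) \<le> norm (y' - x)"
      using nearest[OF \<open>y' \<in> S\<close>] by (simp add: dist_norm norm_minus_commute)
    ultimately show "0 + norm (p - x)^2 / 2 \<le> c + norm z^2 / 2"
      by (simp add: power_mono)
  qed
  then show ?thesis by (simp add: inner_diff_left inner_diff_right)
qed

lemma proj_eqI:
  fixes S :: "'a::real_inner set"
  assumes "convex S" and "p \<in> S" and "\<And>y. y \<in> S \<Longrightarrow> dist x p \<le> dist x y"
  shows "proj S x = p"
  unfolding proj_def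
proof (rule the_equality)
  fix q assume q: "q \<in> S \<and> (\<forall>y\<in>S. dist x q \<le> dist x y)"
  have "inner (x - q) (p - q) + inner (x - p) (q - p) = norm (p - q)^2"
    by (simp add: power2_norm_eq_inner inner_diff_left inner_diff_right inner_commute algebra_simps)
  moreover have "inner (x - q) (p - q) \<le> 0" "inner (x - p) (q - p) \<le> 0"
    using nearest_point_variational[OF \<open>convex S\<close>] assms q by blast+
  ultimately have "norm (p - q)^2 \<le> 0" by linarith
  then show "q = p" by simp
qed (use assms in blast)

lemma
  fixes S :: "'a::{real_inner,complete_space} set"
  assumes "closed S" and "convex S" and "S \<noteq> {}"
  shows proj_in: "proj S x \<in> S"
    and proj_inner_le: "y \<in> S \<Longrightarrow> inner (x - proj S x) (y - proj S x) \<le> 0"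
proof -
  obtain p where p: "p \<in> S" "\<And>y. y \<in> S \<Longrightarrow> dist x p \<le> dist x y"
    using nearest_point_exists[OF assms] by blast
  show "proj S x \<in> S" using proj_eqI[OF \<open>convex S\<close> p] p by simp
  show "y \<in> S \<Longrightarrow> inner (x - proj S x) (y - proj S x) \<le> 0"
    using proj_eqI[OF \<open>convex S\<close> p] nearest_point_variational[OF \<open>convex S\<close> p] by simp
qed

lemma proj_zero_le_inner:
  fixes S :: "'a::{real_inner,complete_space} set"
  assumes "closed S" and "convex S" and "S \<noteq> {}" and "y \<in> S"
  shows "norm (proj S 0)^2 \<le> inner (proj S 0) y"
  using proj_inner_le[OF assms, of 0] by (simp add: inner_diff_right power2_norm_eq_inner)

section \<open>Minty's theorem and resolvents\<close>

definition fitzpatrick_epigraph :: "('a::real_inner \<Rightarrow> 'a set) \<Rightarrow> (('a \<times> 'a) \<times> real) set" where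
  "fitzpatrick_epigraph M =
     {((x, u), c). \<forall>y w. w \<in> M y \<longrightarrow> inner x w + inner y u - inner y w \<le> c}"

lemma fitzpatrick_epigraph_eq_INT:
  "fitzpatrick_epigraph M = (\<Inter>(y, w)\<in>{(y, w). w \<in> M y}. {e. inner ((w, y), -1) e \<le> inner y w})"
proof -
  have "inner ((w, y), -1) ((x, u), c) \<le> inner y w \<longleftrightarrow>
      inner x w + inner y u - inner y w \<le> c" for x u y w :: 'a and c :: real
    by (auto simp: inner_commute)
  then show ?thesis unfolding fitzpatrick_epigraph_def by auto
qed

lemma closed_fitzpatrick_epigraph: "closed (fitzpatrick_epigraph M)"
  unfolding fitzpatrick_epigraph_eq_INT by (auto intro!: closed_INT closed_halfspace_le)

lemma convex_fitzpatrick_epigraph: "convex (fitzpatrick_epigraph M)"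
  unfolding fitzpatrick_epigraph_eq_INT by (auto intro!: convex_INT convex_halfspace_le)

lemma graph_in_fitzpatrick_epigraph:
  assumes "monotone_op M" and "u \<in> M x"
  shows "((x, u), inner x u) \<in> fitzpatrick_epigraph M"
  unfolding fitzpatrick_epigraph_def
proof (clarify)
  fix y w assume "w \<in> M y"
  have "inner x w + inner y u - inner y w = inner x u - inner (x - y) (u - w)"
    by (simp add: inner_diff_left inner_diff_right)
  then show "inner x w + inner y u - inner y w \<le> inner x u"
    using monotone_opD[OF assms \<open>w \<in> M y\<close>] by linarith
qed

lemma fitzpatrick_epigraph_inner_le:
  assumes "max_monotone M" and "((x, u), c) \<in> fitzpatrick_epigraph M"
  shows "inner x u \<le> c"
proof (rule ccontr)
  assume "\<not> inner x u \<le> c"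
  have epi: "inner x w + inner y u - inner y w \<le> c" if "w \<in> M y" for y w
    using assms(2) that unfolding fitzpatrick_epigraph_def by blast
  have "u \<in> M x"
  proof (rule max_monotoneD[OF assms(1)])
    fix y w assume "w \<in> M y"
    have "inner (x - y) (u - w) = inner x u - (inner x w + inner y u - inner y w)"
      by (simp add: inner_diff_left inner_diff_right)
    then show "0 \<le> inner (x - y) (u - w)"
      using epi[OF \<open>w \<in> M y\<close>] \<open>\<not> inner x u \<le> c\<close> by linarith
  qed
  then show False using epi[of u x] \<open>\<not> inner x u \<le> c\<close> by simp
qed

lemma max_monotone_graph_nonempty:
  assumes "max_monotone M"
  obtains x u where "u \<in> M x"
proof (cases "\<exists>x u. u \<in> M x")
  case False
  then have "0 \<in> M 0" by (intro max_monotoneD[OF assms]) auto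
  then show ?thesis using that by blast
qed (use that in blast)

lemma fitzpatrick_epigraph_lower:
  assumes "max_monotone M" and "((x, u), c) \<in> fitzpatrick_epigraph M"
  shows "0 \<le> c + norm (x, u)^2 / 2"
proof -
  have "0 \<le> norm (x + u)^2 / 2" by simp
  also have "\<dots> = inner x u + norm (x, u)^2 / 2"
    by (simp add: power2_norm_eq_inner inner_add_left inner_add_right inner_commute field_simps)
  also have "\<dots> \<le> c + norm (x, u)^2 / 2"
    using fitzpatrick_epigraph_inner_le[OF assms] by simp
  finally show ?thesis .
qed

lemma fitzpatrick_minimizer_le:
  assumes "max_monotone M" and in_epi: "((x0, u0), c0) \<in> fitzpatrick_epigraph M"
    and min: "\<And>z c. (z, c) \<in> fitzpatrick_epigraph M \<Longrightarrow> c0 + norm (x0, u0)^2 / 2 \<le> c + norm z^2 / 2"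
    and "w \<in> M y"
  shows "norm (x0 + u0)^2 \<le> inner (u0 + y) (x0 + w)"
proof -
  have "0 \<le> inner y w - c0 + inner (x0, u0) ((y, w) - (x0, u0))"
    by (rule quadratic_min_variational[OF convex_fitzpatrick_epigraph in_epi
          graph_in_fitzpatrick_epigraph min])
      (use max_monotone_imp_monotone_op[OF assms(1)] \<open>w \<in> M y\<close> in simp_all)
  moreover have "inner x0 u0 \<le> c0" by (rule fitzpatrick_epigraph_inner_le[OF assms(1) in_epi])
  ultimately show ?thesis
    by (simp add: power2_norm_eq_inner inner_add_left inner_add_right inner_diff_right inner_commute)
qed

text \<open>Simons and Zalinescu: minimize \<open>c + (\<bar>x\<bar>\<^sup>2 + \<bar>u\<bar>\<^sup>2)/2\<close> over the Fitzpatrick epigraph.\<close>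
theorem minty_zero:
  fixes M :: "'a::{real_inner,complete_space} \<Rightarrow> 'a set"
  assumes "max_monotone M"
  shows "\<exists>p. - p \<in> M p"
proof -
  let ?E = "fitzpatrick_epigraph M"
  obtain y0 w0 where "w0 \<in> M y0" using max_monotone_graph_nonempty[OF assms] .
  then have "?E \<noteq> {}"
    using graph_in_fitzpatrick_epigraph[OF max_monotone_imp_monotone_op[OF assms]] by blast
  have "0 \<le> c + norm z^2 / 2" if "(z, c) \<in> ?E" for z c
    using fitzpatrick_epigraph_lower[OF assms] that by (cases z) simp
  then obtain x0 u0 c0 where in_epi: "((x0, u0), c0) \<in> ?E"
    and min: "\<And>z c. (z, c) \<in> ?E \<Longrightarrow> c0 + norm (x0, u0)^2 / 2 \<le> c + norm z^2 / 2"
    using quadratic_attains_inf[OF closed_fitzpatrick_epigraph convex_fitzpatrick_epigraph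
        \<open>?E \<noteq> {}\<close>] by (metis surj_pair)
  have key: "norm (x0 + u0)^2 \<le> inner (u0 + y) (x0 + w)" if "w \<in> M y" for y w
    by (rule fitzpatrick_minimizer_le[OF assms in_epi _ that]) (rule min)
  have "- x0 \<in> M (- u0)"
  proof (rule max_monotoneD[OF assms])
    fix y w assume "w \<in> M y"
    have "inner (- u0 - y) (- x0 - w) = inner (u0 + y) (x0 + w)"
      by (simp add: inner_diff_left inner_diff_right inner_add_left inner_add_right)
    then show "0 \<le> inner (- u0 - y) (- x0 - w)"
      using key[OF \<open>w \<in> M y\<close>] zero_le_power2[of "norm (x0 + u0)"] by linarith
  qed
  with key[OF this] have "u0 = - x0" by (simp add: add_eq_0_iff)
  with \<open>- x0 \<in> M (- u0)\<close> show ?thesis by auto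
qed

corollary minty:
  fixes M :: "'a::{real_inner,complete_space} \<Rightarrow> 'a set"
  assumes "max_monotone M"
  shows "\<exists>p. z - p \<in> M p"
proof -
  obtain p where "- p \<in> (\<lambda>w. w - z) ` M p"
    using minty_zero[OF max_monotone_translate[OF assms]] by blast
  then have "z - p \<in> M p" by (auto simp: algebra_simps)
  then show ?thesis by blast
qed

lemma resolvent_unique:
  assumes "monotone_op M" and "z - p \<in> M p" and "z - q \<in> M q"
  shows "p = q"
proof -
  have "0 \<le> inner (p - q) ((z - p) - (z - q))" using monotone_opD[OF assms] .
  also have "\<dots> = - (norm (p - q)^2)"
    by (simp add: power2_norm_eq_inner inner_diff_left inner_diff_right inner_commute)
  finally show ?thesis by simp
qed

lemma resolvent_mem:
  fixes M :: "'a::{real_inner,complete_space} \<Rightarrow> 'a set"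
  assumes "max_monotone M"
  shows "z - resolvent M z \<in> M (resolvent M z)"
proof -
  obtain p where p: "z - p \<in> M p" using minty[OF assms] by blast
  have "q = p" if "z - q \<in> M q" for q
    using resolvent_unique[OF max_monotone_imp_monotone_op[OF assms] that p] .
  then show ?thesis
    unfolding resolvent_def using theI[of "\<lambda>q. z - q \<in> M q" p] p by blast
qed

lemma resolvent_eqI:
  fixes M :: "'a::{real_inner,complete_space} \<Rightarrow> 'a set"
  assumes "max_monotone M" and "z - p \<in> M p"
  shows "resolvent M z = p"
  using resolvent_unique[OF max_monotone_imp_monotone_op[OF assms(1)] resolvent_mem[OF assms(1)]
      assms(2)] .

lemma resolvent_op_inv:
  fixes M :: "'a::{real_inner,complete_space} \<Rightarrow> 'a set"
  assumes "max_monotone M"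
  shows "resolvent (op_inv M) z = z - resolvent M z"
  by (rule resolvent_eqI[OF max_monotone_op_inv[OF assms]])
    (use resolvent_mem[OF assms, of z] in \<open>simp add: op_inv_def\<close>)

definition resolvent_pair :: "('a::real_inner \<Rightarrow> 'a set) \<Rightarrow> 'a \<Rightarrow> 'a \<times> 'a" where
  "resolvent_pair A y = (resolvent A y, resolvent (op_inv A) y)"

lemma norm_resolvent_pair_diff_le:
  fixes A :: "'a::{real_inner,complete_space} \<Rightarrow> 'a set"
  assumes "max_monotone A"
  shows "norm (resolvent_pair A z - resolvent_pair A w) \<le> norm (z - w)"
proof -
  define p where "p = resolvent A z - resolvent A w"
  define q where "q = resolvent (op_inv A) z - resolvent (op_inv A) w"
  have "0 \<le> inner p q"
    unfolding p_def q_def resolvent_op_inv[OF assms]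
    by (rule monotone_opD[OF max_monotone_imp_monotone_op resolvent_mem resolvent_mem]) fact+
  moreover have "z - w = p + q" unfolding p_def q_def resolvent_op_inv[OF assms] by simp
  ultimately have "norm p^2 + norm q^2 \<le> norm (z - w)^2"
    by (simp add: power2_norm_eq_inner inner_add_left inner_add_right inner_commute)
  then show ?thesis
    by (simp add: resolvent_pair_def p_def q_def norm_Pair real_le_lsqrt)
qed

section \<open>Convexity of the closures of domains and ranges\<close>

lemma convex_closure_if_segments_in_closure:
  fixes S :: "'a::real_normed_vector set"
  assumes "\<And>x y u. x \<in> S \<Longrightarrow> y \<in> S \<Longrightarrow> 0 \<le> u \<Longrightarrow> u \<le> 1 \<Longrightarrow>
             (1 - u) *\<^sub>R x + u *\<^sub>R y \<in> closure S"
  shows "convex (closure S)"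
  unfolding convex_alt
proof (intro ballI allI impI)
  fix x y and u :: real assume "x \<in> closure S" "y \<in> closure S" "0 \<le> u \<and> u \<le> 1"
  let ?f = "\<lambda>(x, y). (1 - u) *\<^sub>R x + u *\<^sub>R y"
  have "?f ` closure (S \<times> S) \<subseteq> closure S"
    by (rule image_closure_subset) (use assms \<open>0 \<le> u \<and> u \<le> 1\<close> in
        \<open>auto intro!: continuous_intros simp: split_beta\<close>)
  then show "(1 - u) *\<^sub>R x + u *\<^sub>R y \<in> closure S"
    using \<open>x \<in> closure S\<close> \<open>y \<in> closure S\<close> by (force simp: closure_Times)
qed

lemma add_mem_closure_of_closure:
  fixes S :: "'a::real_normed_vector set"
  assumes "\<And>s. s \<in> S \<Longrightarrow> s + w \<in> closure S" and "s \<in> closure S"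
  shows "s + w \<in> closure S"
proof -
  have "(\<lambda>s. s + w) ` closure S \<subseteq> closure S"
    by (rule image_closure_subset) (use assms(1) in \<open>auto intro!: continuous_intros\<close>)
  then show ?thesis using \<open>s \<in> closure S\<close> by blast
qed

lemma add_mem_closure_if_ray_near:
  fixes S :: "'a::real_normed_vector set"
  assumes "convex (closure S)" and "s \<in> S"
    and near: "\<And>l. 0 < l \<Longrightarrow> \<exists>e. s + l *\<^sub>R w + e \<in> S \<and> norm e^2 \<le> l * K"
  shows "s + w \<in> closure S"
proof -
  have "\<exists>e. s + real (Suc n) *\<^sub>R w + e \<in> S \<and> norm e^2 \<le> real (Suc n) * K" for n
    using near by simp
  then obtain e where e: "\<And>n. s + real (Suc n) *\<^sub>R w + e n \<in> S"
    and e_le: "\<And>n. norm (e n)^2 \<le> real (Suc n) * K" by metis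
  define q where "q n = s + w + (1 / real (Suc n)) *\<^sub>R e n" for n
  have "q n \<in> closure S" for n
  proof -
    have "(1 - 1 / real (Suc n)) *\<^sub>R s + (1 / real (Suc n)) *\<^sub>R (s + real (Suc n) *\<^sub>R w + e n)
        \<in> closure S"
      by (rule convexD_alt[OF assms(1)]) (use closure_subset e \<open>s \<in> S\<close> in auto)
    also have "(1 - 1 / real (Suc n)) *\<^sub>R s
        + (1 / real (Suc n)) *\<^sub>R (s + real (Suc n) *\<^sub>R w + e n) = q n"
      unfolding q_def by (simp add: scaleR_add_right scaleR_diff_left del: of_nat_Suc)
    finally show ?thesis .
  qed
  moreover have "q \<longlonglongrightarrow> s + w"
  proof -
    have "\<forall>n. norm ((1 / real (Suc n)) *\<^sub>R e n) \<le> sqrt (K / real (Suc n))"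
    proof (intro allI real_le_rsqrt)
      fix n
      have "norm ((1 / real (Suc n)) *\<^sub>R e n)^2 = norm (e n)^2 / real (Suc n)^2"
        by (simp add: power_divide)
      also have "\<dots> \<le> real (Suc n) * K / real (Suc n)^2"
        using e_le[of n] by (intro divide_right_mono) simp_all
      also have "\<dots> = K / real (Suc n)" by (simp add: power2_eq_square)
      finally show "norm ((1 / real (Suc n)) *\<^sub>R e n)^2 \<le> K / real (Suc n)" .
    qed
    moreover have "(\<lambda>n. sqrt (K / real (Suc n))) \<longlonglongrightarrow> 0"
      using tendsto_real_sqrt[OF LIMSEQ_Suc[OF lim_const_over_n[of K]]] by simp
    ultimately have "(\<lambda>n. (1 / real (Suc n)) *\<^sub>R e n) \<longlonglongrightarrow> 0"
      by (rule Lim_null_comparison[OF always_eventually])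
    from tendsto_add[OF tendsto_const this] show ?thesis unfolding q_def by simp
  qed
  ultimately show ?thesis using closed_sequentially[OF closed_closure] by blast
qed

lemma lt_if_sq_le_small_affine:
  fixes d e Y :: real
  assumes "0 < e" and "0 \<le> Y" and "0 \<le> d" and "d^2 \<le> e^2 / (2 * (Y + e)) * (Y + d)"
  shows "d < e"
proof (rule ccontr)
  assume "\<not> d < e"
  have "0 < Y + e" using assms by simp
  then have "2 * (Y + e) * d^2 \<le> e^2 * (Y + d)"
    using assms(4) by (simp add: field_simps)
  also have "\<dots> \<le> e * ((Y + e) * d)"
  proof -
    have "e * Y \<le> d * Y" using \<open>\<not> d < e\<close> \<open>0 \<le> Y\<close> by (simp add: mult_right_mono)
    then have "e * (Y + d) \<le> (Y + e) * d" by (simp add: algebra_simps)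
    then show ?thesis using \<open>0 < e\<close> by (simp add: power2_eq_square mult.assoc)
  qed
  finally have "((Y + e) * d) * (2 * d) \<le> ((Y + e) * d) * e"
    by (simp add: power2_eq_square algebra_simps)
  moreover have "0 < (Y + e) * d" using \<open>0 < Y + e\<close> \<open>\<not> d < e\<close> \<open>0 < e\<close> by simp
  ultimately have "2 * d \<le> e" by (simp add: mult_le_cancel_left_pos)
  then show False using \<open>\<not> d < e\<close> \<open>0 < e\<close> by simp
qed

lemma op_dom_near_convex_combination:
  fixes M :: "'a::{real_inner,complete_space} \<Rightarrow> 'a set"
  assumes "max_monotone M" and "w1 \<in> M y1" and "w2 \<in> M y2" and "0 \<le> u" and "u \<le> 1"
    and "0 < l"
  defines "z \<equiv> (1 - u) *\<^sub>R y1 + u *\<^sub>R y2"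
  obtains p where "p \<in> op_dom M"
    and "norm (p - z)^2
           \<le> l * (norm w1 + norm w2) * (norm (y1 - z) + norm (y2 - z) + norm (p - z))"
proof -
  obtain p w where "w \<in> M p" and zp: "z - p = l *\<^sub>R w"
    using minty[OF max_monotone_scale[OF assms(1) \<open>0 < l\<close>], of z] by blast
  have toward: "inner (y - p) (z - p) \<le> l * (norm (y - p) * norm w')" if "w' \<in> M y" for y w'
  proof -
    have "inner (y - p) w \<le> inner (y - p) w'"
      using monotone_opD[OF max_monotone_imp_monotone_op[OF assms(1)] \<open>w \<in> M p\<close> that]
      by (simp add: inner_diff_left inner_diff_right inner_commute)
    also have "\<dots> \<le> norm (y - p) * norm w'" by (rule norm_cauchy_schwarz)
    finally show ?thesis using \<open>0 < l\<close> zp by (simp add: mult_left_mono)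
  qed
  let ?d = "norm (p - z)" and ?Y = "norm (y1 - z) + norm (y2 - z)"
  have near: "norm (y - p) \<le> ?Y + ?d" if "y = y1 \<or> y = y2" for y
  proof -
    have "norm (y - p) \<le> norm (y - z) + ?d"
      using norm_triangle_ineq[of "y - z" "z - p"] by (simp add: norm_minus_commute)
    moreover have "norm (y - z) \<le> ?Y" using that by auto
    ultimately show ?thesis by linarith
  qed
  have "?d^2 = (1 - u) * inner (y1 - p) (z - p) + u * inner (y2 - p) (z - p)"
    unfolding z_def by (simp add: power2_norm_eq_inner inner_diff_left inner_diff_right
        inner_add_left inner_commute algebra_simps)
  also have "\<dots> \<le> (1 - u) * (l * (norm (y1 - p) * norm w1)) + u * (l * (norm (y2 - p) * norm w2))"
    using toward[OF assms(2)] toward[OF assms(3)] \<open>0 \<le> u\<close> \<open>u \<le> 1\<close>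
    by (intro add_mono mult_left_mono) auto
  also have "\<dots> \<le> 1 * (l * ((?Y + ?d) * norm w1)) + 1 * (l * ((?Y + ?d) * norm w2))"
    using near \<open>0 \<le> u\<close> \<open>u \<le> 1\<close> \<open>0 < l\<close>
    by (intro add_mono mult_mono mult_left_mono mult_right_mono) auto
  also have "\<dots> = l * (norm w1 + norm w2) * (?Y + ?d)" by (simp add: algebra_simps)
  finally show ?thesis using that \<open>w \<in> M p\<close> unfolding op_dom_def by blast
qed

theorem convex_closure_op_dom:
  fixes M :: "'a::{real_inner,complete_space} \<Rightarrow> 'a set"
  assumes "max_monotone M"
  shows "convex (closure (op_dom M))"
proof (rule convex_closure_if_segments_in_closure)
  fix y1 y2 and u :: real
  assume "y1 \<in> op_dom M" "y2 \<in> op_dom M" "0 \<le> u" "u \<le> 1"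
  then obtain w1 w2 where w: "w1 \<in> M y1" "w2 \<in> M y2" unfolding op_dom_def by blast
  define z where "z = (1 - u) *\<^sub>R y1 + u *\<^sub>R y2"
  define Y where "Y = norm (y1 - z) + norm (y2 - z)"
  show "z \<in> closure (op_dom M)"
    unfolding closure_approachable
  proof (intro allI impI)
    fix e :: real assume "0 < e"
    define \<delta> where "\<delta> = e^2 / (2 * (Y + e))"
    define l where "l = \<delta> / (norm w1 + norm w2 + 1)"
    have "0 \<le> Y" unfolding Y_def by simp
    then have "0 < \<delta>" unfolding \<delta>_def using \<open>0 < e\<close> by simp
    then have "0 < l" unfolding l_def by (simp add: add_nonneg_pos)
    have "l * (norm w1 + norm w2) = \<delta> * ((norm w1 + norm w2) / (norm w1 + norm w2 + 1))"
      unfolding l_def by simp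
    also have "\<dots> \<le> \<delta> * 1"
      using \<open>0 < \<delta>\<close> add_nonneg_pos[of "norm w1 + norm w2" 1]
      by (intro mult_left_mono) (simp_all add: divide_le_eq_1)
    finally have "l * (norm w1 + norm w2) \<le> \<delta>" by simp
    obtain p where "p \<in> op_dom M"
      and p: "norm (p - z)^2 \<le> l * (norm w1 + norm w2) * (Y + norm (p - z))"
      using op_dom_near_convex_combination[OF assms w \<open>0 \<le> u\<close> \<open>u \<le> 1\<close> \<open>0 < l\<close>]
      unfolding z_def Y_def by blast
    have "norm (p - z)^2 \<le> \<delta> * (Y + norm (p - z))"
      using order_trans[OF p mult_right_mono[OF \<open>l * (norm w1 + norm w2) \<le> \<delta>\<close>]] \<open>0 \<le> Y\<close>
      by simp
    then have "norm (p - z) < e"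
      by (intro lt_if_sq_le_small_affine[OF \<open>0 < e\<close> \<open>0 \<le> Y\<close>]) (simp_all add: \<delta>_def)
    then show "\<exists>p\<in>op_dom M. dist p z < e" using \<open>p \<in> op_dom M\<close> by (auto simp: dist_norm)
  qed
qed

lemma convex_closure_set_sum:
  fixes P Q :: "'a::real_normed_vector set"
  assumes "convex (closure P)" and "convex (closure Q)"
  shows "convex (closure (set_sum P Q))"
proof -
  have "set_sum P Q = P + Q" unfolding set_sum_def set_plus_def by auto
  moreover have "closure (P + Q) = closure (closure P + closure Q)"
  proof (rule antisym)
    show "closure (P + Q) \<subseteq> closure (closure P + closure Q)"
      by (intro closure_mono set_plus_mono2 closure_subset)
    show "closure (closure P + closure Q) \<subseteq> closure (P + Q)"
      by (intro closure_minimal closure_sum closed_closure)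
  qed
  ultimately show ?thesis
    using convex_closure[OF convex_set_plus[OF assms]] by simp
qed

lemma closure_negations:
  fixes S :: "'a::real_normed_vector set"
  shows "closure (uminus ` S) = uminus ` closure S"
  using closure_scaleR[of "-1" S] by (simp add: image_image)

lemma convex_closure_set_diff:
  fixes P Q :: "'a::real_normed_vector set"
  assumes "convex (closure P)" and "convex (closure Q)"
  shows "convex (closure (set_diff P Q))"
proof -
  have "set_diff P Q = set_sum P (uminus ` Q)"
    unfolding set_diff_def set_sum_def by force
  then show ?thesis
    using convex_closure_set_sum[OF assms(1)] convex_negations[OF assms(2)]
    by (simp add: closure_negations)
qed

section \<open>The gap vectors\<close>

lemma graph_shift_value:
  fixes M :: "'a::{real_inner,complete_space} \<Rightarrow> 'a set"
  assumes "max_monotone M" and "u \<in> M x" and "0 < l"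
    and lower: "\<And>y. y \<in> op_dom M \<Longrightarrow> c \<le> inner n y"
  obtains e where "u - l *\<^sub>R n + e \<in> M (x - e)" and "norm e^2 \<le> l * (inner n x - c)"
proof
  define p where "p = resolvent M (x + u - l *\<^sub>R n)"
  have "(x + u - l *\<^sub>R n) - p \<in> M p" unfolding p_def by (rule resolvent_mem[OF assms(1)])
  moreover have "(x + u - l *\<^sub>R n) - p = u - l *\<^sub>R n + (x - p)" by simp
  ultimately have shifted: "u - l *\<^sub>R n + (x - p) \<in> M p" by simp
  then show "u - l *\<^sub>R n + (x - p) \<in> M (x - (x - p))" by simp
  have "0 \<le> inner (p - x) ((u - l *\<^sub>R n + (x - p)) - u)"
    using monotone_opD[OF max_monotone_imp_monotone_op[OF assms(1)] shifted \<open>u \<in> M x\<close>] .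
  also have "\<dots> = l * inner n (x - p) - norm (x - p)^2"
    by (simp add: inner_diff_left inner_diff_right power2_norm_eq_inner inner_commute algebra_simps)
  finally have "norm (x - p)^2 \<le> l * inner n (x - p)" by simp
  also have "\<dots> \<le> l * (inner n x - c)"
    using lower[of p] shifted \<open>0 < l\<close> by (auto simp: op_dom_def inner_diff_right)
  finally show "norm (x - p)^2 \<le> l * (inner n x - c)" .
qed

lemma op_dom_op_inv [simp]: "op_dom (op_inv M) = op_ran M"
  unfolding op_dom_def op_ran_def op_inv_def by auto

lemma graph_shift_point:
  fixes M :: "'a::{real_inner,complete_space} \<Rightarrow> 'a set"
  assumes "max_monotone M" and "u \<in> M x" and "0 < l"
    and lower: "\<And>y. y \<in> op_ran M \<Longrightarrow> c \<le> inner n y"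
  obtains e where "u - e \<in> M (x - l *\<^sub>R n + e)" and "norm e^2 \<le> l * (inner n u - c)"
proof -
  have "x \<in> op_inv M u" using \<open>u \<in> M x\<close> unfolding op_inv_def by simp
  from graph_shift_value[OF max_monotone_op_inv[OF assms(1)] this \<open>0 < l\<close>] lower
  obtain e where "x - l *\<^sub>R n + e \<in> op_inv M (u - e)" and "norm e^2 \<le> l * (inner n u - c)"
    by auto
  then show ?thesis using that unfolding op_inv_def by simp
qed

abbreviation dom_diff :: "('a::ab_group_add \<Rightarrow> 'a set) \<Rightarrow> ('a \<Rightarrow> 'a set) \<Rightarrow> 'a set" where
  "dom_diff A B \<equiv> set_diff (op_dom A) (op_dom B)"

abbreviation ran_sum :: "('a::ab_group_add \<Rightarrow> 'a set) \<Rightarrow> ('a \<Rightarrow> 'a set) \<Rightarrow> 'a set" where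
  "ran_sum A B \<equiv> set_sum (op_ran A) (op_ran B)"

lemma
  fixes A B :: "'a::{real_inner,complete_space} \<Rightarrow> 'a set"
  assumes "max_monotone A" and "max_monotone B"
  shows convex_closure_dom_diff: "convex (closure (dom_diff A B))"
    and convex_closure_ran_sum: "convex (closure (ran_sum A B))"
    and dom_diff_nonempty: "dom_diff A B \<noteq> {}"
    and ran_sum_nonempty: "ran_sum A B \<noteq> {}"
proof -
  show "convex (closure (dom_diff A B))"
    by (intro convex_closure_set_diff convex_closure_op_dom assms)
  show "convex (closure (ran_sum A B))"
    using convex_closure_op_dom[OF max_monotone_op_inv[OF assms(1)]]
      convex_closure_op_dom[OF max_monotone_op_inv[OF assms(2)]]
    by (intro convex_closure_set_sum) simp_all
  obtain a b where "- a \<in> A a" "- b \<in> B b" using minty_zero[OF assms(1)] minty_zero[OF assms(2)] by blast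
  then have "a - b \<in> dom_diff A B" "- a + - b \<in> ran_sum A B"
    unfolding set_diff_def set_sum_def op_dom_def op_ran_def by blast+
  then show "dom_diff A B \<noteq> {}" "ran_sum A B \<noteq> {}" by blast+
qed

lemma
  fixes A B :: "'a::{real_inner,complete_space} \<Rightarrow> 'a set"
  assumes "max_monotone A" and "max_monotone B" and "u \<in> A x" and "u' \<in> B x'"
  shows proj_zero_dom_diff_le: "norm (proj (closure (dom_diff A B)) 0)^2
                                 \<le> inner (proj (closure (dom_diff A B)) 0) (x - x')"
    and proj_zero_ran_sum_le: "norm (proj (closure (ran_sum A B)) 0)^2
                                 \<le> inner (proj (closure (ran_sum A B)) 0) (u + u')"
proof -
  have "x - x' \<in> dom_diff A B" "u + u' \<in> ran_sum A B"
    using assms(3,4) unfolding set_diff_def set_sum_def op_dom_def op_ran_def by blast+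
  then have "x - x' \<in> closure (dom_diff A B)" "u + u' \<in> closure (ran_sum A B)"
    using closure_subset by blast+
  then show "norm (proj (closure (dom_diff A B)) 0)^2 \<le> inner (proj (closure (dom_diff A B)) 0) (x - x')"
    and "norm (proj (closure (ran_sum A B)) 0)^2 \<le> inner (proj (closure (ran_sum A B)) 0) (u + u')"
    by (simp_all add: proj_zero_le_inner convex_closure_dom_diff convex_closure_ran_sum
        dom_diff_nonempty ran_sum_nonempty assms(1,2))
qed

lemma dom_diff_translate_closure:
  fixes A B :: "'a::{real_inner,complete_space} \<Rightarrow> 'a set"
  assumes "max_monotone A" and "max_monotone B"
    and lower: "\<And>x x' u u'. u \<in> A x \<Longrightarrow> u' \<in> B x' \<Longrightarrow> c \<le> inner w (u + u')"
    and "d \<in> closure (dom_diff A B)"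
  shows "d + w \<in> closure (dom_diff A B)"
proof (rule add_mem_closure_of_closure[OF _ \<open>d \<in> closure (dom_diff A B)\<close>])
  fix s assume "s \<in> dom_diff A B"
  then obtain x x' u u' where s: "s = x - x'" and "u \<in> A x" "u' \<in> B x'"
    unfolding set_diff_def op_dom_def by blast
  show "s + w \<in> closure (dom_diff A B)"
  proof (rule add_mem_closure_if_ray_near[OF convex_closure_dom_diff[OF assms(1,2)] \<open>s \<in> _\<close>])
    fix l :: real assume "0 < l"
    have "c - inner w u \<le> inner w u''" if "u'' \<in> op_ran B" for u''
      using lower[OF \<open>u \<in> A x\<close>] that unfolding op_ran_def by (force simp: inner_add_right)
    with graph_shift_point[OF assms(2) \<open>u' \<in> B x'\<close> \<open>0 < l\<close>]
    obtain e where "u' - e \<in> B (x' - l *\<^sub>R w + e)"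
      and e: "norm e^2 \<le> l * (inner w u' - (c - inner w u))" by metis
    then have "x - (x' - l *\<^sub>R w + e) \<in> dom_diff A B"
      using \<open>u \<in> A x\<close> unfolding set_diff_def op_dom_def by blast
    then show "\<exists>e. s + l *\<^sub>R w + e \<in> dom_diff A B \<and> norm e^2 \<le> l * (inner w (u + u') - c)"
      using e unfolding s by (intro exI[of _ "- e"]) (simp add: inner_add_right algebra_simps)
  qed
qed

lemma set_diff_commute: "set_diff Q P = uminus ` set_diff P Q"
proof -
  have "{q - p |q p. q \<in> Q \<and> p \<in> P} = uminus ` {p - q |p q. p \<in> P \<and> q \<in> Q}"
    by (auto simp: image_iff; metis minus_diff_eq)
  then show ?thesis unfolding set_diff_def .
qed

lemma dom_diff_translate_closure_neg:
  fixes A B :: "'a::{real_inner,complete_space} \<Rightarrow> 'a set"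
  assumes "max_monotone A" and "max_monotone B"
    and lower: "\<And>x x' u u'. u \<in> A x \<Longrightarrow> u' \<in> B x' \<Longrightarrow> c \<le> inner w (u + u')"
    and "d \<in> closure (dom_diff A B)"
  shows "d - w \<in> closure (dom_diff A B)"
proof -
  have "- d + w \<in> closure (dom_diff B A)"
  proof (rule dom_diff_translate_closure[OF assms(2,1)])
    show "c \<le> inner w (u + u')" if "u \<in> B x" "u' \<in> A x'" for x x' u u'
      using lower[OF that(2,1)] by (simp add: add.commute)
    show "- d \<in> closure (dom_diff B A)"
      using \<open>d \<in> closure (dom_diff A B)\<close>
      by (simp add: set_diff_commute[of "op_dom B"] closure_negations)
  qed
  then obtain d' where "d' \<in> closure (dom_diff A B)" and "- d + w = - d'"
    by (auto simp: set_diff_commute[of "op_dom B"] closure_negations)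
  moreover from \<open>- d + w = - d'\<close> have "d' = d - w" by (simp add: algebra_simps)
  ultimately show ?thesis by simp
qed

lemma ran_sum_translate_closure:
  fixes A B :: "'a::{real_inner,complete_space} \<Rightarrow> 'a set"
  assumes "max_monotone A" and "max_monotone B"
    and lower: "\<And>x x' u u'. u \<in> A x \<Longrightarrow> u' \<in> B x' \<Longrightarrow> c \<le> inner w (x - x')"
    and "r \<in> closure (ran_sum A B)"
  shows "r + w \<in> closure (ran_sum A B)"
proof (rule add_mem_closure_of_closure[OF _ \<open>r \<in> closure (ran_sum A B)\<close>])
  fix s assume "s \<in> ran_sum A B"
  then obtain x x' u u' where s: "s = u + u'" and "u \<in> A x" "u' \<in> B x'"
    unfolding set_sum_def op_ran_def by blast
  show "s + w \<in> closure (ran_sum A B)"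
  proof (rule add_mem_closure_if_ray_near[OF convex_closure_ran_sum[OF assms(1,2)] \<open>s \<in> _\<close>])
    fix l :: real assume "0 < l"
    have "c - inner w x \<le> inner (- w) x''" if "x'' \<in> op_dom B" for x''
      using lower[OF \<open>u \<in> A x\<close>] that unfolding op_dom_def by (force simp: inner_diff_right)
    with graph_shift_value[OF assms(2) \<open>u' \<in> B x'\<close> \<open>0 < l\<close>]
    obtain e where "u' - l *\<^sub>R (- w) + e \<in> B (x' - e)"
      and e: "norm e^2 \<le> l * (inner (- w) x' - (c - inner w x))" by metis
    then have "u + (u' - l *\<^sub>R (- w) + e) \<in> ran_sum A B"
      using \<open>u \<in> A x\<close> unfolding set_sum_def op_ran_def by blast
    then show "\<exists>e. s + l *\<^sub>R w + e \<in> ran_sum A B \<and> norm e^2 \<le> l * (inner w (x - x') - c)"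
      using e unfolding s by (intro exI[of _ e]) (simp add: inner_diff_right algebra_simps)
  qed
qed

lemma le_if_sq_le_mult:
  fixes a b :: real
  assumes "a^2 \<le> a * b" and "0 \<le> a" and "0 \<le> b"
  shows "a \<le> b"
  using assms by (cases "a = 0") (auto simp: power2_eq_square mult_le_cancel_left_pos)

text \<open>\<open>closure D\<close> is invariant under translation by \<open>\<plusminus>v\<^sub>R\<close> and \<open>closure R\<close> under
  translation by \<open>v\<^sub>D\<close>; minimality of \<open>v\<^sub>D\<close> and \<open>v\<^sub>R\<close> does the rest.\<close>
theorem gap_vector_decomposition:
  fixes A B :: "'a::{real_inner,complete_space} \<Rightarrow> 'a set"
  assumes mA: "max_monotone A" and mB: "max_monotone B"
  defines "vD \<equiv> proj (closure (dom_diff A B)) 0" and "vR \<equiv> proj (closure (ran_sum A B)) 0"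
  shows "inner vD vR = 0"
    and "proj (closure (dom_diff A B) \<inter> closure (ran_sum A B)) 0 = vD + vR"
proof -
  let ?D = "closure (dom_diff A B)" and ?R = "closure (ran_sum A B)"
  have D: "closed ?D" "convex ?D" "?D \<noteq> {}" and R: "closed ?R" "convex ?R" "?R \<noteq> {}"
    using convex_closure_dom_diff[OF mA mB] dom_diff_nonempty[OF mA mB]
      convex_closure_ran_sum[OF mA mB] ran_sum_nonempty[OF mA mB] by simp_all
  have vD_in: "vD \<in> ?D" and vR_in: "vR \<in> ?R"
    unfolding vD_def vR_def using proj_in D R by blast+
  have vD_le: "norm vD^2 \<le> inner vD d" if "d \<in> ?D" for d
    unfolding vD_def by (rule proj_zero_le_inner[OF D that])
  have vR_le: "norm vR^2 \<le> inner vR r" if "r \<in> ?R" for r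
    unfolding vR_def by (rule proj_zero_le_inner[OF R that])
  have "vD + vR \<in> ?D"
    using dom_diff_translate_closure[OF mA mB proj_zero_ran_sum_le[OF mA mB] vD_in]
    unfolding vR_def .
  have "vD - vR \<in> ?D"
    using dom_diff_translate_closure_neg[OF mA mB proj_zero_ran_sum_le[OF mA mB] vD_in]
    unfolding vR_def .
  have "vR + vD \<in> ?R"
    using ran_sum_translate_closure[OF mA mB proj_zero_dom_diff_le[OF mA mB] vR_in]
    unfolding vD_def .
  show orth: "inner vD vR = 0"
    using vD_le[OF \<open>vD + vR \<in> ?D\<close>] vD_le[OF \<open>vD - vR \<in> ?D\<close>]
    by (simp add: inner_add_right inner_diff_right power2_norm_eq_inner)
  show "proj (?D \<inter> ?R) 0 = vD + vR"
  proof (rule proj_eqI)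
    show "convex (?D \<inter> ?R)" using D R by (simp add: convex_Int)
    show "vD + vR \<in> ?D \<inter> ?R" using \<open>vD + vR \<in> ?D\<close> \<open>vR + vD \<in> ?R\<close> by (simp add: add.commute)
    fix y assume y: "y \<in> ?D \<inter> ?R"
    have "norm (vD + vR)^2 = norm vD^2 + norm vR^2"
      using orth by (simp add: power2_norm_eq_inner inner_add_left inner_add_right inner_commute)
    also have "\<dots> \<le> inner (vD + vR) y"
      using vD_le[of y] vR_le[of y] y by (simp add: inner_add_left)
    also have "\<dots> \<le> norm (vD + vR) * norm y" by (rule norm_cauchy_schwarz)
    finally have "norm (vD + vR) \<le> norm y" by (rule le_if_sq_le_mult) simp_all
    then show "dist 0 (vD + vR) \<le> dist 0 y" by simp
  qed
qed

section \<open>The Douglas-Rachford operator\<close>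

lemma fejer_monotone_bounded:
  fixes s :: "nat \<Rightarrow> 'a::real_normed_vector"
  assumes "fejer_monotone C s"
  shows "bounded (range s)"
proof -
  obtain c where "c \<in> C" and step: "\<And>n. norm (s (Suc n) - c) \<le> norm (s n - c)"
    using assms unfolding fejer_monotone_def by blast
  have "norm (s n - c) \<le> norm (s 0 - c)" for n
    by (induction n) (use step order_trans in blast)+
  then have "range s \<subseteq> cball c (norm (s 0 - c))"
    by (auto simp: dist_norm norm_minus_commute)
  then show ?thesis using bounded_cball bounded_subset by blast
qed

lemma
  fixes a :: "nat \<Rightarrow> 'a::real_normed_vector"
  assumes "bounded (range (\<lambda>n. a n + real n *\<^sub>R w))"
  shows norm_tendsto_at_top_if_bounded_drift:
          "w \<noteq> 0 \<Longrightarrow> filterlim (\<lambda>n. norm (a n)) at_top sequentially"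
    and bounded_iff_zero_drift: "bounded (range a) \<longleftrightarrow> w = 0"
proof -
  obtain K where K: "\<And>n. norm (a n + real n *\<^sub>R w) \<le> K"
    using assms unfolding bounded_iff by blast
  have lower: "real n * norm w - K \<le> norm (a n)" for n
    using K[of n] norm_triangle_ineq4[of "a n + real n *\<^sub>R w" "a n"] by simp
  show unbounded: "filterlim (\<lambda>n. norm (a n)) at_top sequentially" if "w \<noteq> 0"
  proof (rule filterlim_at_top_mono)
    have "filterlim (\<lambda>n. norm w * real n) at_top sequentially"
      using \<open>w \<noteq> 0\<close> by (intro filterlim_tendsto_pos_mult_at_top filterlim_real_sequentially) auto
    then show "filterlim (\<lambda>n. - K + norm w * real n) at_top sequentially"
      by (rule filterlim_tendsto_add_at_top[OF tendsto_const])
    show "\<forall>\<^sub>F n in sequentially. - K + norm w * real n \<le> norm (a n)"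
      using lower by (simp add: mult.commute)
  qed
  show "bounded (range a) \<longleftrightarrow> w = 0"
  proof
    assume "bounded (range a)"
    then obtain M where "\<And>n. norm (a n) \<le> M" unfolding bounded_iff by blast
    then show "w = 0"
      using unbounded filterlim_at_top_dense[of "\<lambda>n. norm (a n)"]
      by (metis (mono_tags, lifting) eventually_sequentially gt_ex linorder_not_le order.refl)
  qed (use assms in simp)
qed

definition douglas_rachford :: "('a::real_inner \<Rightarrow> 'a set) \<Rightarrow> ('a \<Rightarrow> 'a set) \<Rightarrow> 'a \<Rightarrow> 'a" where
  "douglas_rachford A B y = y - resolvent A y + resolvent B (reflected A y)"

lemma norm_douglas_rachford_diff_le:
  fixes A B :: "'a::{real_inner,complete_space} \<Rightarrow> 'a set"
  assumes "max_monotone A" and "max_monotone B"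
  shows "norm (douglas_rachford A B z - douglas_rachford A B w)
           \<le> norm (resolvent_pair A z - resolvent_pair A w)"
proof -
  define p where "p = resolvent A z - resolvent A w"
  define q where "q = resolvent (op_inv A) z - resolvent (op_inv A) w"
  define r where "r = resolvent B (reflected A z) - resolvent B (reflected A w)"
  define s where "s = resolvent (op_inv B) (reflected A z) - resolvent (op_inv B) (reflected A w)"
  have "0 \<le> inner r s"
    unfolding r_def s_def resolvent_op_inv[OF assms(2)]
    by (rule monotone_opD[OF max_monotone_imp_monotone_op resolvent_mem resolvent_mem]) fact+
  moreover have "p = q + r + s" and "douglas_rachford A B z - douglas_rachford A B w = q + r"
    unfolding p_def q_def r_def s_def douglas_rachford_def reflected_def
      resolvent_op_inv[OF assms(1)] resolvent_op_inv[OF assms(2)]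
    by (simp_all add: algebra_simps scaleR_2)
  moreover have "norm (q + r)^2 + norm (q + s)^2 + 2 * inner r s = norm (q + r + s)^2 + norm q^2"
    by (simp add: power2_norm_eq_inner inner_add_left inner_add_right inner_commute)
  ultimately have "norm (douglas_rachford A B z - douglas_rachford A B w)^2 \<le> norm p^2 + norm q^2"
    using zero_le_power2[of "norm (q + s)"] by (simp only:)
  then show ?thesis
    by (simp add: resolvent_pair_def p_def q_def norm_Pair real_le_rsqrt)
qed

lemma
  fixes A B :: "'a::{real_inner,complete_space} \<Rightarrow> 'a set"
  assumes "max_monotone A" and "max_monotone B"
  shows douglas_rachford_nonexpansive:
          "norm (douglas_rachford A B z - douglas_rachford A B w) \<le> norm (z - w)"
    and resolvent_pair_douglas_rachford_diff_le:
          "norm (resolvent_pair A (douglas_rachford A B z) - resolvent_pair A (douglas_rachford A B w))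
             \<le> norm (resolvent_pair A z - resolvent_pair A w)"
  using norm_douglas_rachford_diff_le[OF assms] norm_resolvent_pair_diff_le[OF assms(1)]
  by (meson order_trans)+

lemma solS_imp_fixset:
  fixes A B :: "'a::{real_inner,complete_space} \<Rightarrow> 'a set"
  assumes "max_monotone A" and "max_monotone B" and "(z, k) \<in> solS A B v"
  shows "z + k + v \<in> fixset v (douglas_rachford A B)"
    and "resolvent_pair A (z + k + v) = (z, k + v)"
proof -
  have "- k \<in> B (z - v)" and "k + v \<in> A z" using assms(3) unfolding solS_def by auto
  then have J_A: "resolvent A (z + k + v) = z"
    by (intro resolvent_eqI[OF assms(1)]) (simp add: algebra_simps)
  have "reflected A (z + k + v) - (z - v) = - k"
    unfolding reflected_def J_A by (simp add: algebra_simps scaleR_2)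
  then have J_B: "resolvent B (reflected A (z + k + v)) = z - v"
    using \<open>- k \<in> B (z - v)\<close> by (intro resolvent_eqI[OF assms(2)]) simp
  have "douglas_rachford A B (z + k + v) = z + k"
    unfolding douglas_rachford_def J_A J_B by simp
  then show "z + k + v \<in> fixset v (douglas_rachford A B)" unfolding fixset_def by simp
  show "resolvent_pair A (z + k + v) = (z, k + v)"
    unfolding resolvent_pair_def resolvent_op_inv[OF assms(1)] J_A by simp
qed

lemma fixset_imp_solS:
  fixes A B :: "'a::{real_inner,complete_space} \<Rightarrow> 'a set"
  assumes "max_monotone A" and "max_monotone B" and "y \<in> fixset v (douglas_rachford A B)"
  shows "(resolvent A y, resolvent (op_inv A) y - v) \<in> solS A B v"
proof -
  define a where "a = resolvent A y"
  define b where "b = resolvent B (reflected A y)"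
  have "y - a \<in> A a" unfolding a_def by (rule resolvent_mem[OF assms(1)])
  have "reflected A y - b \<in> B b" unfolding b_def by (rule resolvent_mem[OF assms(2)])
  have b_eq: "b = a - v"
    using assms(3) unfolding fixset_def douglas_rachford_def a_def b_def by (simp add: algebra_simps)
  have "reflected A y - b = - (y - a - v)"
    unfolding reflected_def b_eq a_def by (simp add: algebra_simps scaleR_2)
  with \<open>reflected A y - b \<in> B b\<close> have "- (y - a - v) \<in> B (a - v)" by (simp only: b_eq)
  moreover have "y - a - v \<in> (\<lambda>u. - v + u) ` A a"
    using \<open>y - a \<in> A a\<close> by (auto intro: image_eqI[of _ _ "y - a"])
  ultimately show ?thesis
    unfolding solS_def resolvent_op_inv[OF assms(1)] a_def by simp
qed

lemma solS_subset_solZ_times_solK: "solS A B v \<subseteq> solZ A B v \<times> solK A B v"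
proof
  fix p assume "p \<in> solS A B v"
  then obtain z k where p: "p = (z, k)"
    and "- k \<in> B (z - v)" and "k \<in> (\<lambda>u. - v + u) ` A z" unfolding solS_def by auto
  then have "0 \<in> set_sum ((\<lambda>u. - v + u) ` A z) (B (z - v))"
    unfolding set_sum_def by force
  moreover have "0 \<in> set_sum (op_inv (\<lambda>x. (\<lambda>u. - v + u) ` A x) k) (op_vee (\<lambda>y. B (y - v)) k)"
    using \<open>- k \<in> B (z - v)\<close> \<open>k \<in> _\<close>
    unfolding set_sum_def op_inv_def op_vee_def by (force intro: image_eqI[of _ _ z])
  ultimately show "p \<in> solZ A B v \<times> solK A B v" unfolding p solZ_def solK_def by simp
qed

lemma solZ_times_solK_subset_solS:
  assumes "paramonotone A" and "paramonotone B"
  shows "solZ A B v \<times> solK A B v \<subseteq> solS A B v"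
proof clarify
  fix z k assume "z \<in> solZ A B v" "k \<in> solK A B v"
  then obtain a b where a: "a \<in> A z" and b: "b \<in> B (z - v)" and "- v + a + b = 0"
    unfolding solZ_def set_sum_def by auto
  obtain q u y where u: "u \<in> A q" "k = - v + u" and y: "- k \<in> B (y - v)" and "q + - y = 0"
    using \<open>k \<in> solK A B v\<close> unfolding solK_def set_sum_def op_inv_def op_vee_def by auto
  then have kA: "k + v \<in> A q" and kB: "- k \<in> B (q - v)" by (simp_all add: add_eq_0_iff)
  have mA: "monotone_op A" and mB: "monotone_op B"
    using assms unfolding paramonotone_def by blast+
  have mono_A: "0 \<le> inner (z - q) (a - (k + v))" by (rule monotone_opD[OF mA a kA])
  have mono_B: "0 \<le> inner ((z - v) - (q - v)) (b - - k)" by (rule monotone_opD[OF mB b kB])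
  have "a - (k + v) + (b - - k) = 0" using \<open>- v + a + b = 0\<close> by (simp add: algebra_simps)
  then have "inner (z - q) (a - (k + v)) + inner ((z - v) - (q - v)) (b - - k) = 0"
    by (simp flip: inner_add_right)
  then have "inner (z - q) (a - (k + v)) = 0" and "inner ((z - v) - (q - v)) (b - - k) = 0"
    using mono_A mono_B by linarith+
  then have "k + v \<in> A z" and "- k \<in> B (z - v)"
    using assms a kA b kB unfolding paramonotone_def by blast+
  then show "(z, k) \<in> solS A B v" unfolding solS_def by (force intro: image_eqI[of _ _ "k + v"])
qed

text \<open>The gap vectors enter the analysis of the iteration only through these properties,
  which \<open>gap_vector_decomposition\<close> establishes for the projections.\<close>
locale dr_gap_vectors =
  fixes A B :: "'a::{real_inner,complete_space} \<Rightarrow> 'a set" and vD vR :: 'a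
  assumes max_monotone_A: "max_monotone A" and max_monotone_B: "max_monotone B"
    and vD_le: "\<And>x x' u u'. u \<in> A x \<Longrightarrow> u' \<in> B x' \<Longrightarrow> norm vD^2 \<le> inner vD (x - x')"
    and vR_le: "\<And>x x' u u'. u \<in> A x \<Longrightarrow> u' \<in> B x' \<Longrightarrow> norm vR^2 \<le> inner vR (u + u')"
    and orthogonal: "inner vD vR = 0"
begin

lemma inner_gap_vector: "inner vD (vD + vR) = norm vD^2" "inner vR (vD + vR) = norm vR^2"
  using orthogonal by (simp_all add: inner_add_right power2_norm_eq_inner inner_commute)

lemma shifted_graph_points:
  assumes "a' \<in> A a" and "b' \<in> B b" and b: "b = a - (vD + vR)" and b': "b' = (vD + vR) - a'"
  shows "a' - vD \<in> A (a - vR)" and "b' + vD \<in> B (b - vR)"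
proof -
  show "a' - vD \<in> A (a - vR)"
  proof (rule max_monotoneD[OF max_monotone_A])
    fix x w assume "w \<in> A x"
    have "inner vD (a - x) \<le> 0"
      using vD_le[OF \<open>w \<in> A x\<close> \<open>b' \<in> B b\<close>] inner_gap_vector
      unfolding b by (simp add: inner_diff_right)
    moreover have "inner vR (a' - w) \<le> 0"
      using vR_le[OF \<open>w \<in> A x\<close> \<open>b' \<in> B b\<close>] inner_gap_vector
      unfolding b' by (simp add: inner_diff_right inner_add_right)
    moreover have "0 \<le> inner (a - x) (a' - w)"
      by (rule monotone_opD[OF max_monotone_imp_monotone_op[OF max_monotone_A] assms(1) \<open>w \<in> A x\<close>])
    ultimately show "0 \<le> inner (a - vR - x) (a' - vD - w)"
      using orthogonal
      by (simp add: inner_diff_left inner_diff_right inner_commute algebra_simps)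
  qed
  show "b' + vD \<in> B (b - vR)"
  proof (rule max_monotoneD[OF max_monotone_B])
    fix x w assume "w \<in> B x"
    have "0 \<le> inner vD (b - x)"
      using vD_le[OF \<open>a' \<in> A a\<close> \<open>w \<in> B x\<close>] inner_gap_vector
      unfolding b by (simp add: inner_diff_right)
    moreover have "inner vR (b' - w) \<le> 0"
      using vR_le[OF \<open>a' \<in> A a\<close> \<open>w \<in> B x\<close>] inner_gap_vector
      unfolding b' by (simp add: inner_diff_right inner_add_right)
    moreover have "0 \<le> inner (b - x) (b' - w)"
      by (rule monotone_opD[OF max_monotone_imp_monotone_op[OF max_monotone_B] assms(2) \<open>w \<in> B x\<close>])
    ultimately show "0 \<le> inner (b - vR - x) (b' + vD - w)"
      using orthogonal
      by (simp add: inner_diff_left inner_diff_right inner_add_right inner_commute algebra_simps)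
  qed
qed

abbreviation DR :: "'a \<Rightarrow> 'a" where
  "DR \<equiv> douglas_rachford A B"

lemma fixset_shift:
  assumes "y \<in> fixset (vD + vR) DR"
  shows "DR y = y - (vD + vR)"
    and "resolvent A (y - (vD + vR)) = resolvent A y - vR"
    and "y - (vD + vR) \<in> fixset (vD + vR) DR"
proof -
  define a where "a = resolvent A y"
  define b where "b = resolvent B (reflected A y)"
  have a': "y - a \<in> A a" unfolding a_def by (rule resolvent_mem[OF max_monotone_A])
  have b': "reflected A y - b \<in> B b" unfolding b_def by (rule resolvent_mem[OF max_monotone_B])
  show "DR y = y - (vD + vR)" using assms unfolding fixset_def by (simp add: algebra_simps)
  then have b_eq: "b = a - (vD + vR)"
    unfolding douglas_rachford_def a_def b_def by (simp add: algebra_simps)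
  have b'_eq: "reflected A y - b = (vD + vR) - (y - a)"
    unfolding b_eq reflected_def a_def by (simp add: algebra_simps scaleR_2)
  note shifted = shifted_graph_points[OF a' b' b_eq b'_eq]
  have J_A: "resolvent A (y - (vD + vR)) = a - vR"
    by (rule resolvent_eqI[OF max_monotone_A]) (use shifted(1) in \<open>simp add: algebra_simps\<close>)
  then show "resolvent A (y - (vD + vR)) = resolvent A y - vR" unfolding a_def .
  have reflected_shift: "reflected A (y - (vD + vR)) - (b - vR) = (reflected A y - b) + vD"
    unfolding reflected_def J_A a_def by (simp add: algebra_simps scaleR_2)
  have J_B: "resolvent B (reflected A (y - (vD + vR))) = b - vR"
    by (rule resolvent_eqI[OF max_monotone_B], unfold reflected_shift, rule shifted(2))
  have "DR (y - (vD + vR)) = (y - (vD + vR)) - (vD + vR)"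
    unfolding douglas_rachford_def J_A J_B b_eq by simp
  then show "y - (vD + vR) \<in> fixset (vD + vR) DR" unfolding fixset_def by simp
qed

lemma fixset_iterate:
  assumes "y \<in> fixset (vD + vR) DR"
  shows "(DR ^^ n) y \<in> fixset (vD + vR) DR"
    and "(DR ^^ n) y = y - real n *\<^sub>R (vD + vR)"
    and "resolvent A ((DR ^^ n) y) = resolvent A y - real n *\<^sub>R vR"
    and "resolvent_pair A ((DR ^^ n) y) = resolvent_pair A y - real n *\<^sub>R (vR, vD)"
proof -
  have "(DR ^^ n) y \<in> fixset (vD + vR) DR \<and> (DR ^^ n) y = y - real n *\<^sub>R (vD + vR)
      \<and> resolvent A ((DR ^^ n) y) = resolvent A y - real n *\<^sub>R vR"
  proof (induction n)
    case (Suc n)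
    then have fix_n: "(DR ^^ n) y \<in> fixset (vD + vR) DR"
      and iterate_n: "(DR ^^ n) y = y - real n *\<^sub>R (vD + vR)"
      and resolvent_n: "resolvent A ((DR ^^ n) y) = resolvent A y - real n *\<^sub>R vR" by blast+
    have step: "(DR ^^ Suc n) y = (DR ^^ n) y - (vD + vR)" using fixset_shift(1)[OF fix_n] by simp
    show ?case
    proof (intro conjI)
      show "(DR ^^ Suc n) y \<in> fixset (vD + vR) DR" unfolding step by (rule fixset_shift(3)[OF fix_n])
      show "(DR ^^ Suc n) y = y - real (Suc n) *\<^sub>R (vD + vR)"
        unfolding step iterate_n by (simp add: algebra_simps)
      show "resolvent A ((DR ^^ Suc n) y) = resolvent A y - real (Suc n) *\<^sub>R vR"
        unfolding step fixset_shift(2)[OF fix_n] resolvent_n by (simp add: algebra_simps)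
    qed
  qed (use assms in simp)
  then show "(DR ^^ n) y \<in> fixset (vD + vR) DR" and iterate: "(DR ^^ n) y = y - real n *\<^sub>R (vD + vR)"
    and resolvent: "resolvent A ((DR ^^ n) y) = resolvent A y - real n *\<^sub>R vR" by blast+
  show "resolvent_pair A ((DR ^^ n) y) = resolvent_pair A y - real n *\<^sub>R (vR, vD)"
    unfolding resolvent_pair_def resolvent_op_inv[OF max_monotone_A] resolvent
    by (simp add: iterate algebra_simps)
qed

definition shadow :: "'a \<Rightarrow> nat \<Rightarrow> 'a \<times> 'a" where
  "shadow x n = resolvent_pair A ((DR ^^ n) x) + real n *\<^sub>R (vR, vD)"

lemma shadow_minus_resolvent_pair:
  assumes "y \<in> fixset (vD + vR) DR"
  shows "shadow x n - resolvent_pair A y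
           = resolvent_pair A ((DR ^^ n) x) - resolvent_pair A ((DR ^^ n) y)"
  unfolding shadow_def fixset_iterate(4)[OF assms] by (simp add: algebra_simps)

lemma norm_shadow_minus_resolvent_pair_decreasing:
  assumes "y \<in> fixset (vD + vR) DR"
  shows "norm (shadow x (Suc n) - resolvent_pair A y) \<le> norm (shadow x n - resolvent_pair A y)"
  unfolding shadow_minus_resolvent_pair[OF assms] funpow.simps comp_def
  by (rule resolvent_pair_douglas_rachford_diff_le[OF max_monotone_A max_monotone_B])

lemma fejer_monotone_shadow:
  assumes "fixset (vD + vR) DR \<noteq> {}"
  shows "fejer_monotone (resolvent_pair A ` fixset (vD + vR) DR) (shadow x)"
  unfolding fejer_monotone_def
  using assms norm_shadow_minus_resolvent_pair_decreasing by blast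

lemma shifted_shadow_minus_solS:
  assumes "(z, k) \<in> solS A B (vD + vR)"
  shows "(0, - (vD + vR)) + shadow x n - (z, k) = shadow x n - resolvent_pair A (z + k + (vD + vR))"
  using solS_imp_fixset(2)[OF max_monotone_A max_monotone_B assms] by simp

lemma fejer_monotone_shifted_shadow:
  assumes "fixset (vD + vR) DR \<noteq> {}"
  shows "fejer_monotone (solS A B (vD + vR)) (\<lambda>n. (0, - (vD + vR)) + shadow x n)"
  unfolding fejer_monotone_def
proof (intro conjI ballI allI)
  show "solS A B (vD + vR) \<noteq> {}"
    using assms fixset_imp_solS[OF max_monotone_A max_monotone_B] by blast
  fix c n assume "c \<in> solS A B (vD + vR)"
  moreover obtain z k where c: "c = (z, k)" by fastforce
  ultimately have zk: "(z, k) \<in> solS A B (vD + vR)" by simp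
  from norm_shadow_minus_resolvent_pair_decreasing[OF
      solS_imp_fixset(1)[OF max_monotone_A max_monotone_B zk], of x n]
  show "norm ((0, - (vD + vR)) + shadow x (Suc n) - c) \<le> norm ((0, - (vD + vR)) + shadow x n - c)"
    unfolding c shifted_shadow_minus_solS[OF zk] .
qed

lemma bounded_shadow_components:
  assumes "fixset (vD + vR) DR \<noteq> {}"
  shows "bounded (range (\<lambda>n. resolvent A ((DR ^^ n) x) + real n *\<^sub>R vR))"
    and "bounded (range (\<lambda>n. resolvent (op_inv A) ((DR ^^ n) x) + real n *\<^sub>R vD))"
  using bounded_fst[OF fejer_monotone_bounded[OF fejer_monotone_shadow[OF assms]]]
    bounded_snd[OF fejer_monotone_bounded[OF fejer_monotone_shadow[OF assms]]]
  by (simp_all add: image_image shadow_def resolvent_pair_def)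

lemma norm_iterate_diff_le: "norm ((DR ^^ n) x - (DR ^^ n) y) \<le> norm (x - y)"
proof (induction n)
  case (Suc n)
  have "norm (DR ((DR ^^ n) x) - DR ((DR ^^ n) y)) \<le> norm ((DR ^^ n) x - (DR ^^ n) y)"
    by (rule douglas_rachford_nonexpansive[OF max_monotone_A max_monotone_B])
  then show ?case using Suc by simp
qed simp

lemma bounded_reflected_shadow:
  assumes "f \<in> fixset (vD + vR) DR"
  shows "bounded (range (\<lambda>n. (resolvent B (reflected A ((DR ^^ n) x)) + real n *\<^sub>R vR,
                               resolvent (op_inv B) (reflected A ((DR ^^ n) x)) - real n *\<^sub>R vD)))"
proof -
  define d where "d n = (DR ^^ n) x - (DR ^^ n) f" for n
  define s where "s n = fst (shadow x n)" for n
  have "range d \<subseteq> cball 0 (norm (x - f))"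
    using norm_iterate_diff_le unfolding d_def by auto
  then have d: "bounded (range d)" by (rule bounded_subset[OF bounded_cball])
  have d_Suc: "bounded (range (\<lambda>n. d (Suc n)))" using d by (rule bounded_subset) auto
  have s: "bounded (range s)"
    using bounded_fst[OF fejer_monotone_bounded[OF fejer_monotone_shadow]] assms
    unfolding s_def image_image by blast
  have J_B_eq: "resolvent B (reflected A z) = DR z - z + resolvent A z" for z
    unfolding douglas_rachford_def by simp
  have J_B_inv_eq: "resolvent (op_inv B) (reflected A z) = resolvent A z - DR z" for z
    unfolding resolvent_op_inv[OF max_monotone_B] douglas_rachford_def reflected_def
    by (simp add: scaleR_2 algebra_simps)
  have J_B: "resolvent B (reflected A ((DR ^^ n) x)) + real n *\<^sub>R vR
      = d (Suc n) - d n - (vD + vR) + s n" for n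
    unfolding d_def s_def shadow_def resolvent_pair_def J_B_eq fixset_iterate(2)[OF assms]
    by (simp add: algebra_simps)
  have J_B_inv: "resolvent (op_inv B) (reflected A ((DR ^^ n) x)) - real n *\<^sub>R vD
      = s n - d (Suc n) - f + (vD + vR)" for n
    unfolding d_def s_def shadow_def resolvent_pair_def J_B_inv_eq fixset_iterate(2)[OF assms]
    by (simp add: algebra_simps)
  have "bounded (range (\<lambda>n. d (Suc n) - d n - (vD + vR) + s n))"
    and "bounded (range (\<lambda>n. s n - d (Suc n) - f + (vD + vR)))"
    by (intro bounded_plus_comp bounded_minus_comp d d_Suc s; simp)+
  from bounded_Times[OF this] show ?thesis
    unfolding J_B J_B_inv by (rule bounded_subset) auto
qed

end

theorem theorem5p5:
  fixes A B :: "'a::{real_inner, complete_space} \<Rightarrow> 'a set"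
    and T :: "'a \<Rightarrow> 'a" and v vD vR f x :: 'a
  assumes mA: "max_monotone A" and mB: "max_monotone B"
    and T_def: "T = (\<lambda>y. y - resolvent A y + resolvent B (reflected A y))"
    and v_def: "v = proj (closure (range (\<lambda>y. y - T y))) 0"
    and vD_def: "vD = proj (closure (set_diff (op_dom A) (op_dom B))) 0"
    and vR_def: "vR = proj (closure (set_sum (op_ran A) (op_ran B))) 0"
    and hyp1: "closure (range (\<lambda>y. y - T y))
                 = closure (set_diff (op_dom A) (op_dom B) \<inter> set_sum (op_ran A) (op_ran B))"
    and hyp2: "closure (set_diff (op_dom A) (op_dom B) \<inter> set_sum (op_ran A) (op_ran B))
                 = closure (set_diff (op_dom A) (op_dom B)) \<inter> closure (set_sum (op_ran A) (op_ran B))"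
    and f: "f \<in> fixset v T"
  shows
    "fejer_monotone {(resolvent A y, resolvent (op_inv A) y) | y. y \<in> fixset v T}
       (\<lambda>n. (resolvent A ((T ^^ n) x) + real n *\<^sub>R vR,
             resolvent (op_inv A) ((T ^^ n) x) + real n *\<^sub>R vD))
   \<and> bounded (range (\<lambda>n. (resolvent A ((T ^^ n) x) + real n *\<^sub>R vR,
             resolvent (op_inv A) ((T ^^ n) x) + real n *\<^sub>R vD)))
   \<and> bounded (range (\<lambda>n. (resolvent B (reflected A ((T ^^ n) x)) + real n *\<^sub>R vR,
             resolvent (op_inv B) (reflected A ((T ^^ n) x)) - real n *\<^sub>R vD)))
   \<and> fejer_monotone (solS A B v)
       (\<lambda>n. (0, - v) + (resolvent A ((T ^^ n) x) + real n *\<^sub>R vR,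
             resolvent (op_inv A) ((T ^^ n) x) + real n *\<^sub>R vD))
   \<and> (bounded (range (\<lambda>n. resolvent A ((T ^^ n) x))) \<longleftrightarrow> vR = 0)
   \<and> (vR \<noteq> 0 \<longrightarrow> filterlim (\<lambda>n. norm (resolvent A ((T ^^ n) x))) at_top sequentially)
   \<and> (bounded (range (\<lambda>n. resolvent (op_inv A) ((T ^^ n) x))) \<longleftrightarrow> vD = 0)
   \<and> (vD \<noteq> 0 \<longrightarrow> filterlim (\<lambda>n. norm (resolvent (op_inv A) ((T ^^ n) x))) at_top sequentially)
   \<and> (paramonotone A \<and> paramonotone B \<longrightarrow>
        fejer_monotone (solZ A B v \<times> solK A B v)
          (\<lambda>n. (0, - v) + (resolvent A ((T ^^ n) x) + real n *\<^sub>R vR,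
                resolvent (op_inv A) ((T ^^ n) x) + real n *\<^sub>R vD)))"
proof -
  have T: "T = douglas_rachford A B" unfolding T_def douglas_rachford_def ..
  have orth: "inner vD vR = 0" and v: "v = vD + vR"
    using gap_vector_decomposition[OF mA mB] hyp1 hyp2 unfolding v_def vD_def vR_def by simp_all
  interpret dr_gap_vectors A B vD vR
    using mA mB orth proj_zero_dom_diff_le[OF mA mB] proj_zero_ran_sum_le[OF mA mB]
    unfolding vD_def vR_def by unfold_locales
  have fix_nonempty: "fixset (vD + vR) (douglas_rachford A B) \<noteq> {}" using f unfolding T v by blast
  have shadow: "(resolvent A ((T ^^ n) x) + real n *\<^sub>R vR,
      resolvent (op_inv A) ((T ^^ n) x) + real n *\<^sub>R vD) = shadow x n" for n
    unfolding shadow_def resolvent_pair_def T by simp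
  have fixed_points: "{(resolvent A y, resolvent (op_inv A) y) | y. y \<in> fixset v T}
      = resolvent_pair A ` fixset (vD + vR) (douglas_rachford A B)"
    unfolding resolvent_pair_def T v by blast
  note drift = bounded_shadow_components[OF fix_nonempty, of x, folded T]
  have "paramonotone A \<and> paramonotone B \<longrightarrow>
      fejer_monotone (solZ A B v \<times> solK A B v) (\<lambda>n. (0, - v) + shadow x n)"
    using fejer_monotone_shifted_shadow[OF fix_nonempty, folded v]
      solS_subset_solZ_times_solK solZ_times_solK_subset_solS by (metis subset_antisym)
  then show ?thesis
    unfolding shadow fixed_points
    using fejer_monotone_shadow[OF fix_nonempty]
      fejer_monotone_bounded[OF fejer_monotone_shadow[OF fix_nonempty]]
      bounded_reflected_shadow[of f x, folded T v, OF f]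
      fejer_monotone_shifted_shadow[OF fix_nonempty, folded v]
      bounded_iff_zero_drift[OF drift(1)] norm_tendsto_at_top_if_bounded_drift[OF drift(1)]
      bounded_iff_zero_drift[OF drift(2)] norm_tendsto_at_top_if_bounded_drift[OF drift(2)]
    by blast
qed

end
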